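(* Let $[X,d,m]$ be a metric random walk space with invariant and reversible measure $\nu$. (1) The space is $m$-connected if and only if for every $0\le u_0\in L^2(X,\nu)$ that is not $\nu$-a.e. zero, $e^{t\Delta_m}u_0>0$ $\nu$-a.e. for all $t>0$. (2) The space is weakly-$m$-connected if and only if for every $0\le u_0\in L^2(X,\nu)\cap C(X)$ that is not $\nu$-a.e. zero, $e^{t\Delta_m}u_0>0$ $\nu$-a.e. for all $t>0$.
   Context: A metric random walk space $[X,d,m]$ is a Polish metric space $(X,d)$ with a family $m=(m_x)_{x\in X}$ of Borel probability measures, $x\mapsto m_x(A)$ Borel measurable for each Borel $A$, each with finite first moment. A Radon measure $\nu$ is invariant if $\nu(A)=\int_X m_x(A)\,d\nu(x)$ for every $\nu$-measurable $A$, reversible if $dm_x(y)d\nu(x)=dm_y(x)d\nu(y)$; $(X,\nu)$ is $\sigma$-finite. Iterates: $m_x^{*1}=m_x$, $m_x^{*n}(A)=\int_X m_z(A)\,dm_x^{*(n-1)}(z)$. For $\nu$-measurable $D$, $N^m_D=\{x: m_x^{*n}(D)=0\ \forall n\in\mathbb N\}$. The space (with $\nu$) is $m$-connected if $\nu(N^m_D)=0$ for every $\nu$-measurable $D$ with $0<\nu(D)<\infty$, and weakly-$m$-connected if $\nu(N^m_D)=0$ for every open $D$ with $0<\nu(D)<\infty$. The heat flow $(e^{t\Delta_m})_{t\ge0}$ is the semigroup on $L^2(X,\nu)$ generated by $\Delta_m f(x)=\int_X (f(y)-f(x))dm_x(y)$ (with domain $L^1\cap L^2$), i.e. the semigroup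 associated with the closed form $\mathcal E_m(f,g)=\frac12\iint (f(y)-f(x))(g(y)-g(x))\,dm_x(y)d\nu(x)$. *)

theory Defs
  imports "HOL-Probability.Probability"
begin

definition metric_random_walk_space :: "('a::polish_space \<Rightarrow> 'a measure) \<Rightarrow> bool" where
  "metric_random_walk_space m \<longleftrightarrow>
     (\<forall>x. prob_space (m x) \<and> sets (m x) = sets borel) \<and>
     (\<forall>A\<in>sets borel. (\<lambda>x. emeasure (m x) A) \<in> borel_measurable borel) \<and>
     (\<forall>x. (\<integral>\<^sup>+ y. ennreal (dist x y) \<partial>m x) < \<infinity>)"

definition radon_measure :: "'a::polish_space measure \<Rightarrow> bool" where
  "radon_measure \<nu> \<longleftrightarrow> sets \<nu> = sets borel \<and>
     (\<forall>x. \<exists>U. open U \<and> x \<in> U \<and> emeasure \<nu> U < \<infinity>)"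

definition invariant_measure :: "('a::polish_space \<Rightarrow> 'a measure) \<Rightarrow> 'a measure \<Rightarrow> bool" where
  "invariant_measure m \<nu> \<longleftrightarrow>
     (\<forall>A\<in>sets borel. emeasure \<nu> A = (\<integral>\<^sup>+ x. emeasure (m x) A \<partial>\<nu>))"

text \<open>Reversibility dm_x(y) d\<nu>(x) = dm_y(x) d\<nu>(y), tested on measurable rectangles A x B.\<close>
definition reversible_measure :: "('a::polish_space \<Rightarrow> 'a measure) \<Rightarrow> 'a measure \<Rightarrow> bool" where
  "reversible_measure m \<nu> \<longleftrightarrow>
     (\<forall>A\<in>sets borel. \<forall>B\<in>sets borel.
        (\<integral>\<^sup>+ x. indicator A x * emeasure (m x) B \<partial>\<nu>) =
        (\<integral>\<^sup>+ x. indicator B x * emeasure (m x) A \<partial>\<nu>))"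

fun mstar :: "('a::polish_space \<Rightarrow> 'a measure) \<Rightarrow> nat \<Rightarrow> 'a \<Rightarrow> 'a measure" where
  "mstar m 0 x = return borel x"
| "mstar m (Suc n) x = (if n = 0 then m x else mstar m n x \<bind> m)"

definition N_set :: "('a::polish_space \<Rightarrow> 'a measure) \<Rightarrow> 'a set \<Rightarrow> 'a set" where
  "N_set m D = {x. \<forall>n\<ge>1. emeasure (mstar m n x) D = 0}"

definition m_connected :: "('a::polish_space \<Rightarrow> 'a measure) \<Rightarrow> 'a measure \<Rightarrow> bool" where
  "m_connected m \<nu> \<longleftrightarrow>
     (\<forall>D\<in>sets \<nu>. 0 < emeasure \<nu> D \<and> emeasure \<nu> D < \<infinity> \<longrightarrow> emeasure \<nu> (N_set m D) = 0)"

definition weakly_m_connected :: "('a::polish_space \<Rightarrow> 'a measure) \<Rightarrow> 'a measure \<Rightarrow> bool" where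
  "weakly_m_connected m \<nu> \<longleftrightarrow>
     (\<forall>D. open D \<and> 0 < emeasure \<nu> D \<and> emeasure \<nu> D < \<infinity> \<longrightarrow> emeasure \<nu> (N_set m D) = 0)"

definition laplacian_m :: "('a::polish_space \<Rightarrow> 'a measure) \<Rightarrow> ('a \<Rightarrow> real) \<Rightarrow> 'a \<Rightarrow> real" where
  "laplacian_m m f x = (\<integral> y. (f y - f x) \<partial>m x)"

definition L2_fun :: "'a measure \<Rightarrow> ('a \<Rightarrow> real) \<Rightarrow> bool" where
  "L2_fun \<nu> f \<longleftrightarrow> f \<in> borel_measurable \<nu> \<and> integrable \<nu> (\<lambda>x. (f x)\<^sup>2)"

text \<open>u is the heat flow t \<mapsto> e^{t\<Delta>_m} u0 in L^2(X,\<nu>): u(t) \<in> L^2 for t \<ge> 0,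
  u(0) = u0 (\<nu>-a.e.), and t \<mapsto> u(t) is differentiable in L^2 on [0,\<infinity>)
  (one-sided at 0) with derivative \<Delta>_m u(t), i.e. u is the (strong) solution of
  the abstract Cauchy problem for the generator \<Delta>_m.\<close>
definition heat_flow :: "('a::polish_space \<Rightarrow> 'a measure) \<Rightarrow> 'a measure \<Rightarrow> ('a \<Rightarrow> real)
    \<Rightarrow> (real \<Rightarrow> 'a \<Rightarrow> real) \<Rightarrow> bool" where
  "heat_flow m \<nu> u0 u \<longleftrightarrow>
     (\<forall>t\<ge>0. L2_fun \<nu> (u t)) \<and>
     (AE x in \<nu>. u 0 x = u0 x) \<and>
     (\<forall>t\<ge>0. ((\<lambda>s. \<integral>\<^sup>+ x. ennreal (((u s x - u t x) / (s - t) - laplacian_m m (u t) x)\<^sup>2) \<partial>\<nu>)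
              \<longlongrightarrow> 0) (at t within {0..}))"

end

(* If u(t) <= 0 on a set E of positive finite measure, consider k_j(s) = e^s <P^j 1_E, u(s)>,
   where P f x is the integral of f over m_x. Reversibility turns the heat equation into
   k_j' = k_(j+1), and the k_j are bounded on [0, t]; Taylor expansion with nonnegative
   coefficients k_j(0) then gives k_0(t) >= t^j/j! k_j(0) for every j. Take D = {u0 > eps}
   with 0 < nu D < oo (open if u0 is continuous). Connectedness says that almost every point
   of E reaches D, so by reversibility <P^j 1_E, 1_D> > 0 for some j; then k_j(0) > 0 and
   hence k_0(t) > 0, which contradicts u(t) <= 0 on E.

   Conversely, if nu (N_D) > 0, start from u0 = 1_D (or a continuous function positive exactly
   on the open set D). The Poisson series exp(-t) sum_n t^n/n! P^n u0 is a heat flow which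
   vanishes on N_D - D, while the intersection of D and N_D is null by reversibility; so the
   flow is not positive almost everywhere.

   Only invariance, reversibility and sigma-finiteness of nu enter. *)

theory Submission
  imports Defs
begin

lemma integrable_enn2real_nn_integral:
  assumes [measurable]: "f \<in> borel_measurable M" and fin: "integral\<^sup>N M f < \<infinity>"
  shows "integrable M (\<lambda>x. enn2real (f x))"
    and "(\<integral>x. enn2real (f x) \<partial>M) = enn2real (integral\<^sup>N M f)"
proof -
  have "AE x in M. f x \<noteq> \<infinity>" by (rule nn_integral_PInf_AE) (use fin in auto)
  then have eq: "(\<integral>\<^sup>+x. ennreal (enn2real (f x)) \<partial>M) = integral\<^sup>N M f"
    by (intro nn_integral_cong_AE) (auto simp: less_top)
  show "integrable M (\<lambda>x. enn2real (f x))"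
    by (rule integrableI_bounded) (use eq fin in auto)
  show "(\<integral>x. enn2real (f x) \<partial>M) = enn2real (integral\<^sup>N M f)"
    by (subst integral_eq_nn_integral) (use eq in auto)
qed

lemma integrable_mult_square_integrable:
  fixes f g :: "'b \<Rightarrow> real"
  assumes [measurable]: "f \<in> borel_measurable M" "g \<in> borel_measurable M"
    and "integrable M (\<lambda>x. (f x)\<^sup>2)" "integrable M (\<lambda>x. (g x)\<^sup>2)"
  shows "integrable M (\<lambda>x. f x * g x)"
proof (rule Bochner_Integration.integrable_bound[where f="\<lambda>x. ((f x)\<^sup>2 + (g x)\<^sup>2) / 2"])
  show "integrable M (\<lambda>x. ((f x)\<^sup>2 + (g x)\<^sup>2) / 2)" using assms by auto
  have "norm (f x * g x) \<le> norm (((f x)\<^sup>2 + (g x)\<^sup>2) / 2)" for x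
    using sum_squares_bound[of "\<bar>f x\<bar>" "\<bar>g x\<bar>"] by (simp add: abs_mult)
  then show "AE x in M. norm (f x * g x) \<le> norm (((f x)\<^sup>2 + (g x)\<^sup>2) / 2)" by simp
qed simp

lemma Cauchy_Schwarz_integral:
  fixes f g :: "'b \<Rightarrow> real"
  assumes [measurable]: "f \<in> borel_measurable M" "g \<in> borel_measurable M"
    and f2: "integrable M (\<lambda>x. (f x)\<^sup>2)" and g2: "integrable M (\<lambda>x. (g x)\<^sup>2)"
  shows "(\<integral>x. f x * g x \<partial>M)\<^sup>2 \<le> (\<integral>x. (f x)\<^sup>2 \<partial>M) * (\<integral>x. (g x)\<^sup>2 \<partial>M)"
proof -
  have fg: "integrable M (\<lambda>x. \<bar>f x\<bar> * \<bar>g x\<bar>)"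
    using integrable_mult_square_integrable[OF assms] by (simp add: abs_mult[symmetric])
  have "(\<integral>\<^sup>+x. ennreal \<bar>f x\<bar> * ennreal \<bar>g x\<bar> \<partial>M)\<^sup>2 \<le>
      (\<integral>\<^sup>+x. (ennreal \<bar>f x\<bar>)\<^sup>2 \<partial>M) * (\<integral>\<^sup>+x. (ennreal \<bar>g x\<bar>)\<^sup>2 \<partial>M)"
    by (rule Cauchy_Schwarz_nn_integral) auto
  moreover have "(\<integral>\<^sup>+x. ennreal \<bar>f x\<bar> * ennreal \<bar>g x\<bar> \<partial>M) = ennreal (\<integral>x. \<bar>f x\<bar> * \<bar>g x\<bar> \<partial>M)"
    using nn_integral_eq_integral[OF fg] by (simp add: ennreal_mult[symmetric])
  ultimately have "(\<integral>x. \<bar>f x\<bar> * \<bar>g x\<bar> \<partial>M)\<^sup>2 \<le> (\<integral>x. (f x)\<^sup>2 \<partial>M) * (\<integral>x. (g x)\<^sup>2 \<partial>M)"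
    by (simp add: nn_integral_eq_integral[OF f2] nn_integral_eq_integral[OF g2] ennreal_power
        ennreal_mult[symmetric] ennreal_le_iff integral_nonneg_AE)
  moreover have "\<bar>\<integral>x. f x * g x \<partial>M\<bar> \<le> (\<integral>x. \<bar>f x\<bar> * \<bar>g x\<bar> \<partial>M)"
    using integral_abs_bound[of M "\<lambda>x. f x * g x"] by (simp add: abs_mult)
  then have "(\<integral>x. f x * g x \<partial>M)\<^sup>2 \<le> (\<integral>x. \<bar>f x\<bar> * \<bar>g x\<bar> \<partial>M)\<^sup>2"
    by (metis abs_ge_zero power2_abs power_mono)
  ultimately show ?thesis by linarith
qed

lemma square_integrable_diff:
  fixes f g :: "'b \<Rightarrow> real"
  assumes [measurable]: "f \<in> borel_measurable M" "g \<in> borel_measurable M"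
    and "integrable M (\<lambda>x. (f x)\<^sup>2)" "integrable M (\<lambda>x. (g x)\<^sup>2)"
  shows "integrable M (\<lambda>x. (f x - g x)\<^sup>2)"
proof -
  have "integrable M (\<lambda>x. (f x)\<^sup>2 + (g x)\<^sup>2 - 2 * (f x * g x))"
    using assms integrable_mult_square_integrable[of f M g] by auto
  then show ?thesis by (simp add: power2_diff mult.assoc)
qed

lemma square_integrableI:
  fixes f :: "'b \<Rightarrow> real"
  assumes "f \<in> borel_measurable M" and "(\<integral>\<^sup>+x. ennreal ((f x)\<^sup>2) \<partial>M) < \<infinity>"
  shows "integrable M (\<lambda>x. (f x)\<^sup>2)"
  by (rule integrableI_bounded) (use assms in auto)

lemma prob_space_integrable_bounded:
  fixes f :: "'b \<Rightarrow> real"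
  assumes "prob_space M" "f \<in> borel_measurable M" "\<And>x. \<bar>f x\<bar> \<le> B"
  shows "integrable M f"
  using assms by (intro finite_measure.integrable_const_bound[where B=B])
    (auto simp: prob_space_def)

section \<open>Iterated kernels, invariance and reversibility\<close>

locale reversible_random_walk =
  fixes m :: "'a::polish_space \<Rightarrow> 'a measure" and \<nu> :: "'a measure"
  assumes prob_space_m: "\<And>x. prob_space (m x)"
    and sets_m: "\<And>x. sets (m x) = sets borel"
    and measurable_emeasure_m: "\<And>A. A \<in> sets borel \<Longrightarrow> (\<lambda>x. emeasure (m x) A) \<in> borel_measurable borel"
    and sets_\<nu>: "sets \<nu> = sets borel"
    and sigma_finite_\<nu>: "sigma_finite_measure \<nu>"
    and invariant: "\<And>A. A \<in> sets borel \<Longrightarrow> emeasure \<nu> A = (\<integral>\<^sup>+ x. emeasure (m x) A \<partial>\<nu>)"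
    and reversible: "\<And>A B. A \<in> sets borel \<Longrightarrow> B \<in> sets borel \<Longrightarrow>
        (\<integral>\<^sup>+ x. indicator A x * emeasure (m x) B \<partial>\<nu>) =
        (\<integral>\<^sup>+ x. indicator B x * emeasure (m x) A \<partial>\<nu>)"
begin

lemma space_\<nu> [simp]: "space \<nu> = UNIV"
  using sets_eq_imp_space_eq[OF sets_\<nu>] by simp

lemma space_m [simp]: "space (m x) = UNIV"
  using sets_eq_imp_space_eq[OF sets_m[of x]] by simp

lemma measurable_\<nu>_eq [simp]: "measurable \<nu> N = measurable borel N"
  by (rule measurable_cong_sets[OF sets_\<nu> refl])

lemma sets_\<nu>_iff [simp]: "A \<in> sets \<nu> \<longleftrightarrow> A \<in> sets borel"
  using sets_\<nu> by simp

lemma m_in_prob_algebra [measurable]: "m \<in> borel \<rightarrow>\<^sub>M prob_algebra borel"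
proof (rule measurable_prob_algebraI)
  show "m \<in> borel \<rightarrow>\<^sub>M subprob_algebra borel"
    using prob_space_m prob_space_imp_subprob_space sets_m measurable_emeasure_m
    by (intro measurable_subprob_algebra) auto
qed (rule prob_space_m)

lemma m_in_subprob_algebra [measurable]: "m \<in> borel \<rightarrow>\<^sub>M subprob_algebra borel"
  using m_in_prob_algebra by (rule measurable_prob_algebraD)

lemma mstar_Suc_last: "mstar m (Suc n) x = mstar m n x \<bind> m"
proof (cases n)
  case 0
  then show ?thesis by (simp add: bind_return[OF m_in_subprob_algebra])
qed simp

declare mstar.simps(2) [simp del]

lemma mstar_1 [simp]: "mstar m (Suc 0) x = m x"
  by (simp add: mstar.simps)

lemma mstar_in_prob_algebra [measurable]: "mstar m n \<in> borel \<rightarrow>\<^sub>M prob_algebra borel"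
proof (induction n)
  case 0
  have "mstar m 0 = return borel" by (rule ext) simp
  then show ?case by simp
next
  case (Suc n)
  have "mstar m (Suc n) = (\<lambda>x. mstar m n x \<bind> m)" by (rule ext) (simp add: mstar_Suc_last)
  then show ?case using measurable_bind_prob_space[OF Suc m_in_prob_algebra] by simp
qed

lemma mstar_in_subprob_algebra [measurable]: "mstar m n \<in> borel \<rightarrow>\<^sub>M subprob_algebra borel"
  using mstar_in_prob_algebra by (rule measurable_prob_algebraD)

lemma prob_space_mstar: "prob_space (mstar m n x)"
  and sets_mstar [simp]: "sets (mstar m n x) = sets borel"
  using measurable_space[OF mstar_in_prob_algebra, of x n] by (simp_all add: space_prob_algebra)

lemma space_mstar [simp]: "space (mstar m n x) = UNIV"
  using sets_eq_imp_space_eq[OF sets_mstar[of n x]] by simp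

lemma measurable_mstar_eq [simp]: "measurable (mstar m n x) N = measurable borel N"
  by (rule measurable_cong_sets[OF sets_mstar refl])

lemma mstar_Suc_first: "mstar m (Suc n) x = m x \<bind> mstar m n"
proof (induction n arbitrary: x)
  case 0
  then show ?case by (simp add: bind_return''[OF sets_m])
next
  case (Suc n)
  have "mstar m (Suc (Suc n)) x = (m x \<bind> mstar m n) \<bind> m"
    using Suc by (simp add: mstar_Suc_last)
  also have "\<dots> = m x \<bind> (\<lambda>z. mstar m n z \<bind> m)"
    by (rule bind_assoc[where N=borel and R=borel]) simp_all
  finally show ?case by (simp add: mstar_Suc_last)
qed

lemma measurable_emeasure_mstar [measurable]:
  "A \<in> sets borel \<Longrightarrow> (\<lambda>x. emeasure (mstar m n x) A) \<in> borel_measurable borel"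
  by (rule measurable_emeasure_kernel[OF mstar_in_subprob_algebra])

lemma nn_integral_mstar_Suc_first:
  "f \<in> borel_measurable borel \<Longrightarrow>
    (\<integral>\<^sup>+y. f y \<partial>mstar m (Suc n) x) = (\<integral>\<^sup>+z. (\<integral>\<^sup>+y. f y \<partial>mstar m n z) \<partial>m x)"
  unfolding mstar_Suc_first by (rule nn_integral_bind[where B=borel]) auto

lemma nn_integral_mstar_Suc_last:
  "f \<in> borel_measurable borel \<Longrightarrow>
    (\<integral>\<^sup>+y. f y \<partial>mstar m (Suc n) x) = (\<integral>\<^sup>+z. (\<integral>\<^sup>+y. f y \<partial>m z) \<partial>mstar m n x)"
  unfolding mstar_Suc_last by (rule nn_integral_bind[where B=borel]) auto

lemma bind_\<nu>_m: "\<nu> \<bind> m = \<nu>"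
proof (rule measure_eqI)
  have sets_bind: "sets (\<nu> \<bind> m) = sets borel"
    by (rule sets_bind) (auto simp: sets_m)
  then show "sets (\<nu> \<bind> m) = sets \<nu>" by (simp add: sets_\<nu>)
  fix A assume "A \<in> sets (\<nu> \<bind> m)"
  then show "emeasure (\<nu> \<bind> m) A = emeasure \<nu> A"
    using sets_bind invariant by (subst emeasure_bind[where N=borel]) auto
qed

lemma nn_integral_invariant:
  assumes [measurable]: "f \<in> borel_measurable borel"
  shows "(\<integral>\<^sup>+x. (\<integral>\<^sup>+y. f y \<partial>m x) \<partial>\<nu>) = (\<integral>\<^sup>+x. f x \<partial>\<nu>)"
proof -
  have "(\<integral>\<^sup>+x. f x \<partial>(\<nu> \<bind> m)) = (\<integral>\<^sup>+x. (\<integral>\<^sup>+y. f y \<partial>m x) \<partial>\<nu>)"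
    by (rule nn_integral_bind[where B=borel]) auto
  then show ?thesis by (simp add: bind_\<nu>_m)
qed

lemma nn_integral_mstar_invariant:
  "f \<in> borel_measurable borel \<Longrightarrow> (\<integral>\<^sup>+x. (\<integral>\<^sup>+y. f y \<partial>mstar m n x) \<partial>\<nu>) = (\<integral>\<^sup>+x. f x \<partial>\<nu>)"
proof (induction n arbitrary: f)
  case 0
  then show ?case by (simp add: nn_integral_return)
next
  case (Suc n)
  note [measurable] = Suc.prems
  have "(\<integral>\<^sup>+x. (\<integral>\<^sup>+y. f y \<partial>mstar m (Suc n) x) \<partial>\<nu>)
      = (\<integral>\<^sup>+x. (\<integral>\<^sup>+z. (\<integral>\<^sup>+y. f y \<partial>m z) \<partial>mstar m n x) \<partial>\<nu>)"
    by (simp add: nn_integral_mstar_Suc_last)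
  also have "\<dots> = (\<integral>\<^sup>+x. (\<integral>\<^sup>+y. f y \<partial>m x) \<partial>\<nu>)"
    by (rule Suc.IH) measurable
  finally show ?case by (simp add: nn_integral_invariant)
qed

(* joint is the measure nu(dx) m_x(dy) on pairs; reversibility says exactly that it is
   invariant under exchanging the coordinates. *)

definition step_kernel :: "'a \<Rightarrow> ('a \<times> 'a) measure" where
  "step_kernel x = distr (m x) (borel \<Otimes>\<^sub>M borel) (Pair x)"

definition joint :: "('a \<times> 'a) measure" where
  "joint = \<nu> \<bind> step_kernel"

lemma step_kernel_in_subprob_algebra [measurable]:
  "step_kernel \<in> borel \<rightarrow>\<^sub>M subprob_algebra (borel \<Otimes>\<^sub>M borel)"
proof -
  have "step_kernel \<in> borel \<rightarrow>\<^sub>M prob_algebra (borel \<Otimes>\<^sub>M borel)"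
    unfolding step_kernel_def by measurable
  then show ?thesis by (rule measurable_prob_algebraD)
qed

lemma sets_joint: "sets joint = sets (borel \<Otimes>\<^sub>M borel)"
  unfolding joint_def by (rule sets_bind) (auto simp: step_kernel_def)

lemma nn_integral_joint:
  assumes [measurable]: "H \<in> borel_measurable (borel \<Otimes>\<^sub>M borel)"
  shows "(\<integral>\<^sup>+p. H p \<partial>joint) = (\<integral>\<^sup>+x. (\<integral>\<^sup>+y. H (x, y) \<partial>m x) \<partial>\<nu>)"
proof -
  have "(\<integral>\<^sup>+p. H p \<partial>joint) = (\<integral>\<^sup>+x. (\<integral>\<^sup>+p. H p \<partial>step_kernel x) \<partial>\<nu>)"
    unfolding joint_def by (rule nn_integral_bind[where B="borel \<Otimes>\<^sub>M borel"]) auto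
  then show ?thesis
    by (simp add: step_kernel_def nn_integral_distr)
qed

lemma emeasure_joint_Times:
  assumes [measurable]: "A \<in> sets borel" "B \<in> sets borel"
  shows "emeasure joint (A \<times> B) = (\<integral>\<^sup>+ x. indicator A x * emeasure (m x) B \<partial>\<nu>)"
proof -
  have "emeasure joint (A \<times> B) = (\<integral>\<^sup>+p. indicator (A \<times> B) p \<partial>joint)"
    using sets_joint by simp
  also have "\<dots> = (\<integral>\<^sup>+x. (\<integral>\<^sup>+y. indicator A x * indicator B y \<partial>m x) \<partial>\<nu>)"
    by (subst nn_integral_joint) (auto simp: indicator_times)
  also have "\<dots> = (\<integral>\<^sup>+ x. indicator A x * emeasure (m x) B \<partial>\<nu>)"
    by (subst nn_integral_cmult) (auto simp: sets_m)
  finally show ?thesis .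
qed

lemma distr_joint_swap: "distr joint (borel \<Otimes>\<^sub>M borel) (\<lambda>(x, y). (y, x)) = joint"
proof -
  let ?E = "{A \<times> B | A B. A \<in> sets borel \<and> B \<in> sets borel} :: ('a \<times> 'a) set set"
  obtain F :: "nat \<Rightarrow> 'a set" where F: "range F \<subseteq> sets \<nu>" "(\<Union>i. F i) = space \<nu>"
    "\<And>i. emeasure \<nu> (F i) \<noteq> \<infinity>"
    using sigma_finite_measure.sigma_finite[OF sigma_finite_\<nu>] by metis
  have "joint = distr joint (borel \<Otimes>\<^sub>M borel) (\<lambda>(x, y). (y, x))"
  proof (rule measure_eqI_generator_eq[where E="?E" and \<Omega>=UNIV and A="\<lambda>i. F i \<times> UNIV"])
    show "Int_stable ?E" using Int_stable_pair_measure_generator[of borel borel] by simp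
    show "?E \<subseteq> Pow UNIV" by blast
    show "sets joint = sigma_sets UNIV ?E"
      "sets (distr joint (borel \<Otimes>\<^sub>M borel) (\<lambda>(x, y). (y, x))) = sigma_sets UNIV ?E"
      by (simp_all add: sets_joint sets_pair_measure)
    show "range (\<lambda>i. F i \<times> UNIV) \<subseteq> ?E"
    proof clarify
      fix i
      show "\<exists>A B. F i \<times> UNIV = A \<times> B \<and> A \<in> sets borel \<and> B \<in> sets borel"
        using F(1) sets_\<nu> by (intro exI[of _ "F i"] exI[of _ UNIV]) auto
    qed
    show "(\<Union>i. F i \<times> UNIV) = UNIV"
    proof -
      have "(\<Union>i. F i \<times> UNIV) = (\<Union>i. F i) \<times> UNIV" by auto
      then show ?thesis using F(2) by simp
    qed
  next
    fix X assume "X \<in> ?E"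
    then obtain A B where X: "X = A \<times> B" and [measurable]: "A \<in> sets borel" "B \<in> sets borel"
      by blast
    have "(\<lambda>(x, y). (y, x)) -` (A \<times> B) \<inter> space (borel \<Otimes>\<^sub>M borel) = B \<times> A"
      by (auto simp: space_pair_measure)
    then have "emeasure (distr joint (borel \<Otimes>\<^sub>M borel) (\<lambda>(x, y). (y, x))) X = emeasure joint (B \<times> A)"
      using X by (subst emeasure_distr)
        (simp_all add: measurable_cong_sets[OF sets_joint refl] sets_eq_imp_space_eq[OF sets_joint]
          measurable_pair_swap')
    then show "emeasure joint X = emeasure (distr joint (borel \<Otimes>\<^sub>M borel) (\<lambda>(x, y). (y, x))) X"
      using X by (simp add: emeasure_joint_Times reversible)
  next
    fix i
    have "emeasure joint (F i \<times> UNIV) = emeasure \<nu> (F i)"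
      using F(1) sets_\<nu> by (simp add: emeasure_joint_Times prob_space.emeasure_space_1[OF prob_space_m, simplified])
    then show "emeasure joint (F i \<times> UNIV) \<noteq> \<infinity>" using F(3) by simp
  qed
  then show ?thesis ..
qed

lemma nn_integral_reversible:
  assumes [measurable]: "H \<in> borel_measurable (borel \<Otimes>\<^sub>M borel)"
  shows "(\<integral>\<^sup>+x. (\<integral>\<^sup>+y. H (x, y) \<partial>m x) \<partial>\<nu>) = (\<integral>\<^sup>+x. (\<integral>\<^sup>+y. H (y, x) \<partial>m x) \<partial>\<nu>)"
proof -
  have swap: "(\<lambda>(x, y). (y, x)) \<in> joint \<rightarrow>\<^sub>M (borel \<Otimes>\<^sub>M borel :: ('a \<times> 'a) measure)"
    by (simp add: measurable_cong_sets[OF sets_joint refl] measurable_pair_swap')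
  have "(\<integral>\<^sup>+x. (\<integral>\<^sup>+y. H (x, y) \<partial>m x) \<partial>\<nu>) = (\<integral>\<^sup>+p. H p \<partial>distr joint (borel \<Otimes>\<^sub>M borel) (\<lambda>(x, y). (y, x)))"
    by (simp add: nn_integral_joint distr_joint_swap)
  also have "\<dots> = (\<integral>\<^sup>+p. H (case p of (x, y) \<Rightarrow> (y, x)) \<partial>joint)"
    by (rule nn_integral_distr[OF swap]) simp
  also have "\<dots> = (\<integral>\<^sup>+x. (\<integral>\<^sup>+y. H (y, x) \<partial>m x) \<partial>\<nu>)"
    by (subst nn_integral_joint) auto
  finally show ?thesis .
qed

lemma nn_integral_reversible_mult:
  assumes [measurable]: "f \<in> borel_measurable borel" "g \<in> borel_measurable borel"
  shows "(\<integral>\<^sup>+x. f x * (\<integral>\<^sup>+y. g y \<partial>m x) \<partial>\<nu>) = (\<integral>\<^sup>+x. g x * (\<integral>\<^sup>+y. f y \<partial>m x) \<partial>\<nu>)"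
proof -
  have "(\<integral>\<^sup>+x. f x * (\<integral>\<^sup>+y. g y \<partial>m x) \<partial>\<nu>) = (\<integral>\<^sup>+x. (\<integral>\<^sup>+y. f x * g y \<partial>m x) \<partial>\<nu>)"
    by (simp add: nn_integral_cmult)
  also have "\<dots> = (\<integral>\<^sup>+x. (\<integral>\<^sup>+y. f y * g x \<partial>m x) \<partial>\<nu>)"
    using nn_integral_reversible[of "\<lambda>p. f (fst p) * g (snd p)"] by simp
  also have "\<dots> = (\<integral>\<^sup>+x. g x * (\<integral>\<^sup>+y. f y \<partial>m x) \<partial>\<nu>)"
    by (simp add: nn_integral_multc mult.commute)
  finally show ?thesis .
qed

lemma nn_integral_mstar_reversible_mult:
  "f \<in> borel_measurable borel \<Longrightarrow> g \<in> borel_measurable borel \<Longrightarrow>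
    (\<integral>\<^sup>+x. f x * (\<integral>\<^sup>+y. g y \<partial>mstar m n x) \<partial>\<nu>) = (\<integral>\<^sup>+x. g x * (\<integral>\<^sup>+y. f y \<partial>mstar m n x) \<partial>\<nu>)"
proof (induction n arbitrary: f g)
  case 0
  then show ?case by (simp add: nn_integral_return mult.commute)
next
  case (Suc n)
  note [measurable] = Suc.prems
  have "(\<integral>\<^sup>+x. f x * (\<integral>\<^sup>+y. g y \<partial>mstar m (Suc n) x) \<partial>\<nu>)
      = (\<integral>\<^sup>+x. (\<integral>\<^sup>+y. g y \<partial>mstar m n x) * (\<integral>\<^sup>+y. f y \<partial>m x) \<partial>\<nu>)"
    by (simp add: nn_integral_mstar_Suc_first nn_integral_reversible_mult)
  also have "\<dots> = (\<integral>\<^sup>+x. (\<integral>\<^sup>+y. f y \<partial>m x) * (\<integral>\<^sup>+y. g y \<partial>mstar m n x) \<partial>\<nu>)"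
    by (simp add: mult.commute)
  also have "\<dots> = (\<integral>\<^sup>+x. g x * (\<integral>\<^sup>+y. (\<integral>\<^sup>+z. f z \<partial>m y) \<partial>mstar m n x) \<partial>\<nu>)"
    by (rule Suc.IH) measurable
  also have "\<dots> = (\<integral>\<^sup>+x. g x * (\<integral>\<^sup>+y. f y \<partial>mstar m (Suc n) x) \<partial>\<nu>)"
    by (simp add: nn_integral_mstar_Suc_last)
  finally show ?case .
qed

lemma measurable_integral_m [measurable]:
  fixes F :: "'a \<times> 'a \<Rightarrow> real"
  assumes [measurable]: "F \<in> borel_measurable (borel \<Otimes>\<^sub>M borel)"
  shows "(\<lambda>x. \<integral>y. F (x, y) \<partial>m x) \<in> borel_measurable borel"
proof -
  have "(\<lambda>x. integral\<^sup>L (step_kernel x) F) \<in> borel_measurable borel"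
    by (rule measurable_compose[OF step_kernel_in_subprob_algebra integral_measurable_subprob_algebra])
      simp
  then show ?thesis by (simp add: step_kernel_def integral_distr)
qed

lemma measurable_nn_integral_m_pair [measurable]:
  fixes F :: "'a \<times> 'a \<Rightarrow> ennreal"
  assumes [measurable]: "F \<in> borel_measurable (borel \<Otimes>\<^sub>M borel)"
  shows "(\<lambda>x. \<integral>\<^sup>+y. F (x, y) \<partial>m x) \<in> borel_measurable borel"
proof -
  have "(\<lambda>x. integral\<^sup>N (step_kernel x) F) \<in> borel_measurable borel"
    by (rule measurable_compose[OF step_kernel_in_subprob_algebra nn_integral_measurable_subprob_algebra])
      simp
  then show ?thesis by (simp add: step_kernel_def nn_integral_distr)
qed

lemma integral_kernel_eq_nn_integral_parts:
  fixes F :: "'a \<times> 'a \<Rightarrow> real"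
  assumes [measurable]: "F \<in> borel_measurable (borel \<Otimes>\<^sub>M borel)"
    and fin: "(\<integral>\<^sup>+x. (\<integral>\<^sup>+y. ennreal \<bar>F (x, y)\<bar> \<partial>m x) \<partial>\<nu>) < \<infinity>"
  shows "(\<integral>x. (\<integral>y. F (x, y) \<partial>m x) \<partial>\<nu>) =
     enn2real (\<integral>\<^sup>+x. (\<integral>\<^sup>+y. ennreal (F (x, y)) \<partial>m x) \<partial>\<nu>) -
     enn2real (\<integral>\<^sup>+x. (\<integral>\<^sup>+y. ennreal (- F (x, y)) \<partial>m x) \<partial>\<nu>)"
proof -
  define Ia where "Ia x = (\<integral>\<^sup>+y. ennreal \<bar>F (x, y)\<bar> \<partial>m x)" for x
  define Ip where "Ip x = (\<integral>\<^sup>+y. ennreal (F (x, y)) \<partial>m x)" for x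
  define In where "In x = (\<integral>\<^sup>+y. ennreal (- F (x, y)) \<partial>m x)" for x
  have [measurable]: "Ia \<in> borel_measurable borel" "Ip \<in> borel_measurable borel"
    "In \<in> borel_measurable borel"
    unfolding Ia_def Ip_def In_def by measurable
  have "Ip x \<le> Ia x" "In x \<le> Ia x" for x
    unfolding Ia_def Ip_def In_def by (auto intro!: nn_integral_mono ennreal_leI)
  then have fin_parts: "integral\<^sup>N \<nu> Ip < \<infinity>" "integral\<^sup>N \<nu> In < \<infinity>"
    using fin by (auto simp: Ia_def[symmetric] intro: le_less_trans[OF nn_integral_mono])
  have "AE x in \<nu>. Ia x \<noteq> \<infinity>"
    by (rule nn_integral_PInf_AE) (use fin in \<open>auto simp: Ia_def\<close>)
  then have "AE x in \<nu>. (\<integral>y. F (x, y) \<partial>m x) = enn2real (Ip x) - enn2real (In x)"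
  proof eventually_elim
    case (elim x)
    then have "integrable (m x) (\<lambda>y. F (x, y))"
      by (intro integrableI_bounded) (auto simp: Ia_def less_top)
    then show ?case
      unfolding Ip_def In_def by (rule real_lebesgue_integral_def)
  qed
  then have "(\<integral>x. (\<integral>y. F (x, y) \<partial>m x) \<partial>\<nu>) = (\<integral>x. enn2real (Ip x) - enn2real (In x) \<partial>\<nu>)"
    by (intro integral_cong_AE) auto
  also have "\<dots> = enn2real (integral\<^sup>N \<nu> Ip) - enn2real (integral\<^sup>N \<nu> In)"
    using fin_parts by (simp add: integrable_enn2real_nn_integral)
  finally show ?thesis unfolding Ip_def In_def .
qed

lemma integral_reversible:
  fixes F :: "'a \<times> 'a \<Rightarrow> real"
  assumes [measurable]: "F \<in> borel_measurable (borel \<Otimes>\<^sub>M borel)"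
    and fin: "(\<integral>\<^sup>+x. (\<integral>\<^sup>+y. ennreal \<bar>F (x, y)\<bar> \<partial>m x) \<partial>\<nu>) < \<infinity>"
  shows "(\<integral>x. (\<integral>y. F (x, y) \<partial>m x) \<partial>\<nu>) = (\<integral>x. (\<integral>y. F (y, x) \<partial>m x) \<partial>\<nu>)"
proof -
  have swap: "(\<integral>\<^sup>+x. (\<integral>\<^sup>+y. h (F (x, y)) \<partial>m x) \<partial>\<nu>) = (\<integral>\<^sup>+x. (\<integral>\<^sup>+y. h (F (y, x)) \<partial>m x) \<partial>\<nu>)"
    if [measurable]: "h \<in> borel_measurable borel" for h :: "real \<Rightarrow> ennreal"
    using nn_integral_reversible[of "\<lambda>p. h (F p)"] by simp
  have "(\<integral>\<^sup>+x. (\<integral>\<^sup>+y. ennreal \<bar>F (y, x)\<bar> \<partial>m x) \<partial>\<nu>) < \<infinity>"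
    using fin swap[of "\<lambda>r. ennreal \<bar>r\<bar>"] by simp
  then show ?thesis
    using integral_kernel_eq_nn_integral_parts[OF _ fin]
      integral_kernel_eq_nn_integral_parts[of "\<lambda>p. F (snd p, fst p)"]
      swap[of "\<lambda>r. ennreal r"] swap[of "\<lambda>r. ennreal (- r)"]
    by simp
qed

lemma integral_reversible_mult:
  fixes f g :: "'a \<Rightarrow> real"
  assumes [measurable]: "f \<in> borel_measurable borel" "g \<in> borel_measurable borel"
    and fin: "(\<integral>\<^sup>+x. (\<integral>\<^sup>+y. ennreal \<bar>f x * g y\<bar> \<partial>m x) \<partial>\<nu>) < \<infinity>"
  shows "integrable \<nu> (\<lambda>x. f x * (\<integral>y. g y \<partial>m x))"
    and "(\<integral>x. f x * (\<integral>y. g y \<partial>m x) \<partial>\<nu>) = (\<integral>x. g x * (\<integral>y. f y \<partial>m x) \<partial>\<nu>)"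
proof -
  have bound: "ennreal \<bar>f x * (\<integral>y. g y \<partial>m x)\<bar> \<le> (\<integral>\<^sup>+y. ennreal \<bar>f x * g y\<bar> \<partial>m x)" for x
  proof -
    have "ennreal (norm (\<integral>y. f x * g y \<partial>m x)) \<le> (\<integral>\<^sup>+y. ennreal (norm (f x * g y)) \<partial>m x)"
    proof (cases "integrable (m x) (\<lambda>y. f x * g y)")
      case True
      then show ?thesis by (rule integral_norm_bound_ennreal)
    qed (simp add: not_integrable_integral_eq)
    then show ?thesis by simp
  qed
  have "(\<integral>\<^sup>+x. ennreal \<bar>f x * (\<integral>y. g y \<partial>m x)\<bar> \<partial>\<nu>)
      \<le> (\<integral>\<^sup>+x. (\<integral>\<^sup>+y. ennreal \<bar>f x * g y\<bar> \<partial>m x) \<partial>\<nu>)"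
    by (rule nn_integral_mono) (rule bound)
  then have "(\<integral>\<^sup>+x. ennreal \<bar>f x * (\<integral>y. g y \<partial>m x)\<bar> \<partial>\<nu>) < \<infinity>"
    using fin by (rule le_less_trans)
  then show "integrable \<nu> (\<lambda>x. f x * (\<integral>y. g y \<partial>m x))"
    by (intro integrableI_bounded) simp_all
  show "(\<integral>x. f x * (\<integral>y. g y \<partial>m x) \<partial>\<nu>) = (\<integral>x. g x * (\<integral>y. f y \<partial>m x) \<partial>\<nu>)"
    using integral_reversible[of "\<lambda>p. f (fst p) * g (snd p)"] fin
    by (simp add: mult.commute)
qed

lemma measurable_laplacian [measurable]:
  "f \<in> borel_measurable borel \<Longrightarrow> laplacian_m m f \<in> borel_measurable borel"
  using measurable_integral_m[of "\<lambda>p. f (snd p) - f (fst p)"]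
  by (simp add: laplacian_m_def[abs_def])

lemma laplacian_eq: "integrable (m x) f \<Longrightarrow> laplacian_m m f x = (\<integral>y. f y \<partial>m x) - f x"
proof -
  interpret prob_space "m x" by (rule prob_space_m)
  show "integrable (m x) f \<Longrightarrow> ?thesis" by (simp add: laplacian_m_def prob_space[simplified])
qed

lemma AE_integrable_m:
  fixes f :: "'a \<Rightarrow> real"
  assumes [measurable]: "f \<in> borel_measurable borel" and f2: "integrable \<nu> (\<lambda>x. (f x)\<^sup>2)"
  shows "AE x in \<nu>. integrable (m x) f"
proof -
  have "(\<integral>\<^sup>+x. (\<integral>\<^sup>+y. ennreal ((f y)\<^sup>2) \<partial>m x) \<partial>\<nu>) < \<infinity>"
    using f2 by (simp add: nn_integral_invariant integrable_iff_bounded)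
  then have "AE x in \<nu>. (\<integral>\<^sup>+y. ennreal ((f y)\<^sup>2) \<partial>m x) \<noteq> \<infinity>"
    by (intro nn_integral_PInf_AE) auto
  then show ?thesis
  proof eventually_elim
    case (elim x)
    then have "integrable (m x) (\<lambda>y. (f y)\<^sup>2)"
      by (intro integrableI_bounded) (auto simp: less_top)
    then show ?case
      using finite_measure.square_integrable_imp_integrable[of "m x" f] prob_space_m
      by (simp add: prob_space_def)
  qed
qed

lemma integral_mult_laplacian:
  fixes G G' v :: "'a \<Rightarrow> real"
  assumes [measurable]: "G \<in> borel_measurable borel" "v \<in> borel_measurable borel"
    and G01: "\<And>x. 0 \<le> G x" "\<And>x. G x \<le> 1" and G': "\<And>x. G' x = (\<integral>y. G y \<partial>m x)"
    and G2: "integrable \<nu> (\<lambda>x. (G x)\<^sup>2)" and G'2: "integrable \<nu> (\<lambda>x. (G' x)\<^sup>2)"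
    and v2: "integrable \<nu> (\<lambda>x. (v x)\<^sup>2)"
  shows "(\<integral>x. G x * laplacian_m m v x \<partial>\<nu>) = (\<integral>x. G' x * v x \<partial>\<nu>) - (\<integral>x. G x * v x \<partial>\<nu>)"
proof -
  have [measurable]: "G' \<in> borel_measurable borel"
    unfolding G'[abs_def] using measurable_integral_m[of "\<lambda>p. G (snd p)"] by simp
  have G'v: "integrable \<nu> (\<lambda>x. G' x * \<bar>v x\<bar>)"
    by (rule integrable_mult_square_integrable) (use G'2 v2 in auto)
  have G'0 [simp]: "0 \<le> G' x" for x
    unfolding G' using G01 by (simp add: integral_nonneg_AE)
  have G'_nn: "(\<integral>\<^sup>+y. ennreal (G y) \<partial>m x) = ennreal (G' x)" for x
    unfolding G' using G01 prob_space_m[of x]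
    by (intro nn_integral_eq_integral prob_space_integrable_bounded[where B=1]) auto
  have "(\<integral>\<^sup>+x. (\<integral>\<^sup>+y. ennreal \<bar>G x * v y\<bar> \<partial>m x) \<partial>\<nu>)
      = (\<integral>\<^sup>+x. ennreal \<bar>v x\<bar> * (\<integral>\<^sup>+y. ennreal (G y) \<partial>m x) \<partial>\<nu>)"
    using nn_integral_reversible_mult[of "\<lambda>x. ennreal (G x)" "\<lambda>y. ennreal \<bar>v y\<bar>"] G01
    by (simp add: abs_mult ennreal_mult nn_integral_cmult)
  also have "\<dots> = ennreal (\<integral>x. G' x * \<bar>v x\<bar> \<partial>\<nu>)"
    using G'v G01 G'_nn
    by (simp add: nn_integral_eq_integral[symmetric] ennreal_mult[symmetric] mult.commute)
  finally have fin: "(\<integral>\<^sup>+x. (\<integral>\<^sup>+y. ennreal \<bar>G x * v y\<bar> \<partial>m x) \<partial>\<nu>) < \<infinity>" by simp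
  have "(\<integral>x. G x * laplacian_m m v x \<partial>\<nu>) = (\<integral>x. G x * (\<integral>y. v y \<partial>m x) - G x * v x \<partial>\<nu>)"
    using AE_integrable_m[OF _ v2]
    by (intro integral_cong_AE) (auto elim!: AE_mp simp: laplacian_eq right_diff_distrib)
  also have "\<dots> = (\<integral>x. G x * (\<integral>y. v y \<partial>m x) \<partial>\<nu>) - (\<integral>x. G x * v x \<partial>\<nu>)"
    using integral_reversible_mult(1)[OF _ _ fin] integrable_mult_square_integrable[of G \<nu> v] G2 v2
    by (intro Bochner_Integration.integral_diff) auto
  finally show ?thesis
    using integral_reversible_mult(2)[OF _ _ fin] by (simp add: G'[symmetric] mult.commute)
qed

definition transition_prob :: "'a set \<Rightarrow> nat \<Rightarrow> 'a \<Rightarrow> real" where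
  "transition_prob E j x = measure (mstar m j x) E"

lemma measurable_transition_prob [measurable]:
  "E \<in> sets borel \<Longrightarrow> transition_prob E j \<in> borel_measurable borel"
  unfolding transition_prob_def measure_def by (intro borel_measurable_enn2real measurable_emeasure_mstar)

lemma ennreal_transition_prob:
  "E \<in> sets borel \<Longrightarrow> ennreal (transition_prob E j x) = emeasure (mstar m j x) E"
proof -
  interpret prob_space "mstar m j x" by (rule prob_space_mstar)
  show "E \<in> sets borel \<Longrightarrow> ?thesis" by (simp add: transition_prob_def emeasure_eq_measure)
qed

lemma transition_prob_nonneg: "0 \<le> transition_prob E j x"
  and transition_prob_le_1: "transition_prob E j x \<le> 1"
  unfolding transition_prob_def using prob_space.prob_le_1[OF prob_space_mstar] by auto

lemma transition_prob_0: "E \<in> sets borel \<Longrightarrow> transition_prob E 0 x = indicator E x"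
  unfolding transition_prob_def by (simp add: measure_return)

lemma transition_prob_Suc:
  assumes E: "E \<in> sets borel"
  shows "transition_prob E (Suc j) x = (\<integral>y. transition_prob E j y \<partial>m x)"
proof -
  have "integrable (m x) (transition_prob E j)"
    using E transition_prob_nonneg transition_prob_le_1
    by (intro prob_space_integrable_bounded[OF prob_space_m, where B=1]) auto
  then have "ennreal (\<integral>y. transition_prob E j y \<partial>m x) = (\<integral>\<^sup>+y. emeasure (mstar m j y) E \<partial>m x)"
    using E by (simp add: nn_integral_eq_integral transition_prob_nonneg ennreal_transition_prob[symmetric])
  also have "\<dots> = emeasure (mstar m (Suc j) x) E"
    unfolding mstar_Suc_first using E by (intro emeasure_bind[where N=borel, symmetric]) auto
  finally show ?thesis
    using E by (simp add: ennreal_transition_prob[symmetric] integral_nonneg_AE transition_prob_nonneg)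
qed

lemma square_integrable_transition_prob:
  assumes E: "E \<in> sets borel" and fin: "emeasure \<nu> E < \<infinity>"
  shows "integrable \<nu> (\<lambda>x. (transition_prob E j x)\<^sup>2)"
    and "(\<integral>x. (transition_prob E j x)\<^sup>2 \<partial>\<nu>) \<le> measure \<nu> E"
proof -
  have "(\<integral>\<^sup>+x. ennreal ((transition_prob E j x)\<^sup>2) \<partial>\<nu>) \<le> (\<integral>\<^sup>+x. ennreal (transition_prob E j x) \<partial>\<nu>)"
    using transition_prob_nonneg transition_prob_le_1
    by (intro nn_integral_mono ennreal_leI) (simp add: power2_eq_square mult_left_le)
  also have "\<dots> = (\<integral>\<^sup>+x. (\<integral>\<^sup>+y. indicator E y \<partial>mstar m j x) \<partial>\<nu>)"
    using E by (simp add: ennreal_transition_prob)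
  also have "\<dots> = emeasure \<nu> E"
    using E nn_integral_mstar_invariant[of "indicator E" j] by simp
  finally have le: "(\<integral>\<^sup>+x. ennreal ((transition_prob E j x)\<^sup>2) \<partial>\<nu>) \<le> emeasure \<nu> E" .
  then show L2: "integrable \<nu> (\<lambda>x. (transition_prob E j x)\<^sup>2)"
    using E fin by (intro square_integrableI) auto
  show "(\<integral>x. (transition_prob E j x)\<^sup>2 \<partial>\<nu>) \<le> measure \<nu> E"
    using le fin by (simp add: nn_integral_eq_integral[OF L2] emeasure_eq_ennreal_measure ennreal_le_iff
        less_top)
qed

lemma measurable_N_set:
  assumes [measurable]: "D \<in> sets borel"
  shows "N_set m D \<in> sets borel"
proof -
  have "Measurable.pred borel (\<lambda>x. \<forall>n. 1 \<le> n \<longrightarrow> emeasure (mstar m n x) D = 0)"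
    by measurable
  then show ?thesis by (simp add: N_set_def pred_def)
qed

lemma exists_finite_measure_subset:
  assumes Z: "Z \<in> sets borel" "emeasure \<nu> Z \<noteq> 0"
  obtains E where "E \<in> sets borel" "E \<subseteq> Z" "emeasure \<nu> E \<noteq> 0" "emeasure \<nu> E < \<infinity>"
proof -
  obtain F :: "nat \<Rightarrow> 'a set" where F: "range F \<subseteq> sets \<nu>" "(\<Union>i. F i) = space \<nu>"
    "\<And>i. emeasure \<nu> (F i) \<noteq> \<infinity>"
    using sigma_finite_measure.sigma_finite[OF sigma_finite_\<nu>] by metis
  have F_borel: "F i \<in> sets borel" for i using F(1) sets_\<nu> by auto
  have "(\<Union>i. Z \<inter> F i) = Z" using F(2) by auto
  then have union: "emeasure \<nu> (\<Union>i. Z \<inter> F i) \<noteq> 0" using Z(2) by simp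
  have "\<exists>i. emeasure \<nu> (Z \<inter> F i) \<noteq> 0"
  proof (rule ccontr)
    assume "\<not> ?thesis"
    then have "emeasure \<nu> (\<Union>i. Z \<inter> F i) = 0"
      using Z(1) F_borel by (intro emeasure_UN_eq_0) auto
    with union show False ..
  qed
  then obtain i where i: "emeasure \<nu> (Z \<inter> F i) \<noteq> 0" ..
  have "emeasure \<nu> (Z \<inter> F i) \<le> emeasure \<nu> (F i)"
    using F_borel Z(1) by (intro emeasure_mono) auto
  then show ?thesis
    using that[of "Z \<inter> F i"] i Z(1) F_borel F(3)[of i] by (auto simp: less_top top_unique)
qed

lemma exists_mstar_reaching:
  assumes D: "D \<in> sets borel" and N: "emeasure \<nu> (N_set m D) = 0"
    and E: "E \<in> sets borel" "emeasure \<nu> E \<noteq> 0"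
  obtains j where "(\<integral>\<^sup>+x. indicator D x * emeasure (mstar m j x) E \<partial>\<nu>) \<noteq> 0"
proof -
  have N_borel: "N_set m D \<in> sets borel"
    using D by (rule measurable_N_set)
  have "\<exists>j. (\<integral>\<^sup>+x. indicator E x * emeasure (mstar m (Suc j) x) D \<partial>\<nu>) \<noteq> 0"
  proof (rule ccontr)
    assume "\<not> ?thesis"
    then have "(\<integral>\<^sup>+x. (\<Sum>j. indicator E x * emeasure (mstar m (Suc j) x) D) \<partial>\<nu>) = 0"
      using D E by (subst nn_integral_suminf) auto
    then have "AE x in \<nu>. (\<Sum>j. indicator E x * emeasure (mstar m (Suc j) x) D) = 0"
      using D E by (subst (asm) nn_integral_0_iff_AE) auto
    then have "AE x in \<nu>. x \<in> E \<longrightarrow> x \<in> N_set m D"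
    proof eventually_elim
      case (elim x)
      show ?case
      proof
        assume "x \<in> E"
        then have "\<forall>j. emeasure (mstar m (Suc j) x) D = 0"
          using elim suminf_eq_zero_iff[of "\<lambda>j. emeasure (mstar m (Suc j) x) D"] by simp
        then show "x \<in> N_set m D" unfolding N_set_def by (auto simp: Suc_le_eq gr0_conv_Suc)
      qed
    qed
    then have "emeasure \<nu> E \<le> emeasure \<nu> (N_set m D)"
      using N_borel by (intro emeasure_mono_AE) auto
    then show False using N E(2) by simp
  qed
  then obtain j where "(\<integral>\<^sup>+x. indicator E x * emeasure (mstar m (Suc j) x) D \<partial>\<nu>) \<noteq> 0" ..
  moreover have "(\<integral>\<^sup>+x. indicator E x * emeasure (mstar m (Suc j) x) D \<partial>\<nu>)
      = (\<integral>\<^sup>+x. indicator D x * emeasure (mstar m (Suc j) x) E \<partial>\<nu>)"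
    using nn_integral_mstar_reversible_mult[of "indicator E" "indicator D" "Suc j"] D E by simp
  ultimately show ?thesis using that[of "Suc j"] by simp
qed

lemma integral_transition_prob_pos:
  fixes v :: "'a \<Rightarrow> real"
  assumes [measurable]: "v \<in> borel_measurable borel" and v2: "integrable \<nu> (\<lambda>x. (v x)\<^sup>2)"
    and v_nonneg: "AE x in \<nu>. 0 \<le> v x"
    and D: "D \<in> sets borel" and v_pos: "AE x in \<nu>. x \<in> D \<longrightarrow> 0 < v x"
    and E: "E \<in> sets borel" "emeasure \<nu> E < \<infinity>"
    and reach: "(\<integral>\<^sup>+x. indicator D x * emeasure (mstar m j x) E \<partial>\<nu>) \<noteq> 0"
  shows "0 < (\<integral>x. transition_prob E j x * v x \<partial>\<nu>)"
proof -
  have int: "integrable \<nu> (\<lambda>x. transition_prob E j x * v x)"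
    using square_integrable_transition_prob[OF E] v2 E by (intro integrable_mult_square_integrable) auto
  have nonneg: "AE x in \<nu>. 0 \<le> transition_prob E j x * v x"
    using v_nonneg by eventually_elim (simp add: transition_prob_nonneg)
  have "(\<integral>x. transition_prob E j x * v x \<partial>\<nu>) \<noteq> 0"
  proof
    assume "(\<integral>x. transition_prob E j x * v x \<partial>\<nu>) = 0"
    then have "AE x in \<nu>. transition_prob E j x * v x = 0"
      using integral_nonneg_eq_0_iff_AE[OF int nonneg] by simp
    with v_pos have "AE x in \<nu>. indicator D x * emeasure (mstar m j x) E = 0"
      by eventually_elim (auto simp: indicator_def E ennreal_transition_prob[symmetric])
    then have "(\<integral>\<^sup>+x. indicator D x * emeasure (mstar m j x) E \<partial>\<nu>) = 0"
      using D E by (subst nn_integral_0_iff_AE) auto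
    with reach show False ..
  qed
  then show ?thesis using integral_nonneg_AE[OF nonneg] by simp
qed

lemma emeasure_Int_N_set:
  assumes D: "D \<in> sets borel"
  shows "emeasure \<nu> (D \<inter> N_set m D) = 0"
proof -
  define F where "F = D \<inter> N_set m D"
  have F [measurable]: "F \<in> sets borel" unfolding F_def using D by (intro sets.Int measurable_N_set)
  define h where "h x = emeasure (m x) F" for x
  \<comment> \<open>By reversibility \<open>\<integral> h\<^sup>2 d\<nu> = \<integral>\<^sub>F m\<^sup>2\<^sub>x(F) d\<nu>\<close>, which vanishes because points of \<open>F\<close>
    do not reach \<open>D\<close> in two steps; so \<open>h = 0\<close> a.e., and \<open>\<nu> F = \<integral> h d\<nu> = 0\<close> by invariance.\<close>
  have [measurable]: "h \<in> borel_measurable borel" unfolding h_def by (rule measurable_emeasure_m[OF F])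
  have h_integral: "(\<integral>\<^sup>+y. indicator F y \<partial>m x) = h x" for x
    by (simp add: h_def sets_m)
  have zero: "indicator F x * (\<integral>\<^sup>+z. h z \<partial>m x) = 0" for x
  proof (cases "x \<in> F")
    case True
    then have "emeasure (mstar m 2 x) D = 0" by (auto simp: F_def N_set_def)
    then have "emeasure (mstar m 2 x) F = 0"
      using emeasure_mono[of F D "mstar m 2 x"] D by (auto simp: F_def)
    moreover have "emeasure (mstar m 2 x) F = (\<integral>\<^sup>+z. h z \<partial>m x)"
      using nn_integral_mstar_Suc_first[of "indicator F" 1 x] F
      by (simp add: numeral_2_eq_2 h_integral)
    ultimately show ?thesis by simp
  qed simp
  have "(\<integral>\<^sup>+x. indicator F x * (\<integral>\<^sup>+z. h z \<partial>m x) \<partial>\<nu>) = 0"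
    unfolding zero by simp
  then have "(\<integral>\<^sup>+x. h x * emeasure (m x) F \<partial>\<nu>) = 0"
    by (simp only: nn_integral_reversible_mult[of "indicator F" h, simplified])
  then have "AE x in \<nu>. h x * h x = 0"
    by (simp add: h_def[symmetric] nn_integral_0_iff_AE)
  then have "(\<integral>\<^sup>+x. h x \<partial>\<nu>) = 0"
    by (simp add: nn_integral_0_iff_AE)
  then show ?thesis unfolding F_def[symmetric] h_def by (simp add: invariant)
qed

end

section \<open>Positivity of heat flows\<close>

lemma has_real_derivative_taylor_poly:
  fixes c :: "nat \<Rightarrow> real"
  shows "((\<lambda>x. \<Sum>i<Suc n. x^i / fact i * c i) has_real_derivative (\<Sum>i<n. x^i / fact i * c (Suc i))) (at x)"
proof -
  have shift: "(\<lambda>x. \<Sum>i<Suc n. x^i / fact i * c i) = (\<lambda>x. c 0 + (\<Sum>i<n. x^Suc i / fact (Suc i) * c (Suc i)))"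
    by (rule ext) (subst sum.lessThan_Suc_shift, simp)
  have "((\<lambda>x. x^Suc i / fact (Suc i) * c (Suc i)) has_real_derivative x^i / fact i * c (Suc i)) (at x)"
    for i
    by (rule derivative_eq_intros refl | simp add: fact_Suc field_simps del: of_nat_Suc)+
  then show ?thesis
    unfolding shift by (intro derivative_eq_intros DERIV_sum) auto
qed

lemma abs_le_of_derivative_bound:
  fixes f f' :: "real \<Rightarrow> real"
  assumes t: "0 \<le> t" and f0: "f 0 = 0" and cont: "continuous_on {0..t} f"
    and der: "\<And>x. 0 < x \<Longrightarrow> x < t \<Longrightarrow> (f has_real_derivative f' x) (at x)"
    and bound: "\<And>x. 0 < x \<Longrightarrow> x < t \<Longrightarrow> \<bar>f' x\<bar> \<le> C * x^n / fact n"
  shows "\<bar>f t\<bar> \<le> C * t^Suc n / fact (Suc n)"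
proof -
  define h where "h x = C * x^Suc n / fact (Suc n)" for x
  have h': "(h has_real_derivative C * x^n / fact n) (at x)" for x
    unfolding h_def
    by (rule derivative_eq_intros refl | simp add: fact_Suc field_simps del: of_nat_Suc)+
  have "continuous_on {0..t} h" unfolding h_def by (intro continuous_intros) auto
  then have mono: "h 0 + \<sigma> * f 0 \<le> h t + \<sigma> * f t" if "\<sigma> = 1 \<or> \<sigma> = -1" for \<sigma>
  proof (intro DERIV_nonneg_imp_increasing_open[OF t, of "\<lambda>x. h x + \<sigma> * f x"])
    fix x assume x: "0 < x" "x < t"
    have "((\<lambda>x. h x + \<sigma> * f x) has_real_derivative C * x^n / fact n + \<sigma> * f' x) (at x)"
      by (intro DERIV_add h' DERIV_cmult der x)
    moreover have "0 \<le> C * x^n / fact n + \<sigma> * f' x"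
      using bound[OF x] that by (auto simp: abs_le_iff)
    ultimately show "\<exists>y. DERIV (\<lambda>x. h x + \<sigma> * f x) x :> y \<and> 0 \<le> y" by blast
  qed (use cont in \<open>auto intro!: continuous_intros\<close>)
  moreover have "h 0 = 0" unfolding h_def by simp
  ultimately have "\<bar>f t\<bar> \<le> h t" using f0 mono[of 1] mono[of "-1"] by simp
  then show ?thesis by (simp add: h_def)
qed

lemma taylor_bound_derivative_chain:
  fixes k :: "nat \<Rightarrow> real \<Rightarrow> real"
  assumes bound: "\<And>j s. 0 \<le> s \<Longrightarrow> s \<le> T \<Longrightarrow> \<bar>k j s\<bar> \<le> C"
    and deriv: "\<And>j s. 0 \<le> s \<Longrightarrow> (k j has_real_derivative k (Suc j) s) (at s within {0..})"
    and t: "0 \<le> t" "t \<le> T"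
  shows "\<bar>k j t - (\<Sum>i<n. t^i / fact i * k (j + i) 0)\<bar> \<le> C * t^n / fact n"
  using t
proof (induction n arbitrary: j t)
  case 0
  then show ?case using bound by simp
next
  case (Suc n)
  define f where "f x = k j x - (\<Sum>i<Suc n. x^i / fact i * k (j + i) 0)" for x
  define f' where "f' x = k (Suc j) x - (\<Sum>i<n. x^i / fact i * k (Suc j + i) 0)" for x
  have "continuous (at x within {0..t}) (k j)" if "x \<in> {0..t}" for x
    using DERIV_continuous[OF deriv[of x j]] that continuous_within_subset[of x "{0..}" "k j" "{0..t}"]
    by auto
  then have "continuous_on {0..t} f"
    unfolding f_def by (intro continuous_intros) (auto simp: continuous_on_eq_continuous_within)
  moreover have "(f has_real_derivative f' x) (at x)" if x: "0 < x" for x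
  proof -
    have "(k j has_real_derivative k (Suc j) x) (at x within {0<..})"
      by (rule has_field_derivative_subset[OF deriv]) (use x in auto)
    then have "(k j has_real_derivative k (Suc j) x) (at x)"
      using at_within_open[of x "{0<..}"] x by simp
    then show ?thesis unfolding f_def f'_def
      using DERIV_diff[OF _ has_real_derivative_taylor_poly[of "\<lambda>i. k (j + i) 0" n x]] by simp
  qed
  moreover have "\<bar>f' x\<bar> \<le> C * x^n / fact n" if "0 < x" "x < t" for x
    unfolding f'_def using Suc.IH[of x "Suc j"] that Suc.prems by simp
  moreover have "f 0 = 0" unfolding f_def by (subst sum.lessThan_Suc_shift) simp
  ultimately show ?case
    using abs_le_of_derivative_bound[OF Suc.prems(1), of f f' C n] unfolding f_def by simp
qed

lemma derivative_chain_pos: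
  fixes k :: "nat \<Rightarrow> real \<Rightarrow> real"
  assumes bound: "\<And>j s. 0 \<le> s \<Longrightarrow> s \<le> t \<Longrightarrow> \<bar>k j s\<bar> \<le> C"
    and deriv: "\<And>j s. 0 \<le> s \<Longrightarrow> (k j has_real_derivative k (Suc j) s) (at s within {0..})"
    and nonneg: "\<And>j. 0 \<le> k j 0" and pos: "0 < k j0 0" and t: "0 < t"
  shows "0 < k 0 t"
proof -
  define c where "c = t^j0 / fact j0 * k j0 0"
  have c: "0 < c" unfolding c_def using pos t by simp
  have "(\<lambda>n. t^n / fact n) \<longlonglongrightarrow> 0"
    using summable_LIMSEQ_zero[OF summable_exp[of t]] by (simp add: field_simps)
  then have "(\<lambda>n. C * (t^n / fact n)) \<longlonglongrightarrow> 0"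
    by (rule tendsto_mult_right_zero)
  then have "\<forall>\<^sub>F n in sequentially. C * (t^n / fact n) < c \<and> j0 < n"
    using c by (intro eventually_conj order_tendstoD(2) eventually_gt_at_top) auto
  then obtain n where n: "C * (t^n / fact n) < c" "j0 < n"
    unfolding eventually_sequentially by blast
  have "c \<le> (\<Sum>i<n. t^i / fact i * k i 0)"
    unfolding c_def using n(2) t nonneg
    by (intro member_le_sum[where f="\<lambda>i. t^i / fact i * k i 0"]) auto
  moreover have "\<bar>k 0 t - (\<Sum>i<n. t^i / fact i * k i 0)\<bar> \<le> C * t^n / fact n"
    using taylor_bound_derivative_chain[where k=k and T=t, OF bound deriv, of t 0 n] t by simp
  ultimately show ?thesis using n(1) by (simp add: abs_le_iff)
qed

locale reversible_heat_flow = reversible_random_walk +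
  fixes u0 :: "'a \<Rightarrow> real" and u :: "real \<Rightarrow> 'a \<Rightarrow> real"
  assumes heat_flow: "heat_flow m \<nu> u0 u"
begin

definition quotient_error :: "real \<Rightarrow> real \<Rightarrow> 'a \<Rightarrow> real" where
  "quotient_error r s x = (u r x - u s x) / (r - s) - laplacian_m m (u s) x"

lemma measurable_u [measurable]: "0 \<le> s \<Longrightarrow> u s \<in> borel_measurable borel"
  and square_integrable_u: "0 \<le> s \<Longrightarrow> integrable \<nu> (\<lambda>x. (u s x)\<^sup>2)"
  and AE_u_0: "AE x in \<nu>. u 0 x = u0 x"
  using heat_flow unfolding heat_flow_def L2_fun_def by simp_all

lemma measurable_quotient_error [measurable]:
  "0 \<le> r \<Longrightarrow> 0 \<le> s \<Longrightarrow> quotient_error r s \<in> borel_measurable borel"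
  unfolding quotient_error_def[abs_def] by measurable

lemma quotient_error_small:
  assumes "0 \<le> s"
  obtains d where "d > 0" and "\<And>r. 0 \<le> r \<Longrightarrow> r \<noteq> s \<Longrightarrow> \<bar>r - s\<bar> < d \<Longrightarrow>
    integrable \<nu> (\<lambda>x. (quotient_error r s x)\<^sup>2) \<and> (\<integral>x. (quotient_error r s x)\<^sup>2 \<partial>\<nu>) < 1"
proof -
  have "((\<lambda>r. \<integral>\<^sup>+x. ennreal ((quotient_error r s x)\<^sup>2) \<partial>\<nu>) \<longlongrightarrow> 0) (at s within {0..})"
    using heat_flow assms unfolding heat_flow_def quotient_error_def by simp
  then have "\<forall>\<^sub>F r in at s within {0..}. (\<integral>\<^sup>+x. ennreal ((quotient_error r s x)\<^sup>2) \<partial>\<nu>) < 1"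
    by (rule order_tendstoD(2)) simp
  then obtain d where d: "d > 0" "\<And>r. 0 \<le> r \<Longrightarrow> r \<noteq> s \<Longrightarrow> \<bar>r - s\<bar> < d \<Longrightarrow>
      (\<integral>\<^sup>+x. ennreal ((quotient_error r s x)\<^sup>2) \<partial>\<nu>) < 1"
    unfolding eventually_at by (auto simp: dist_real_def)
  show ?thesis
  proof (rule that[OF d(1)])
    fix r assume r: "0 \<le> r" "r \<noteq> s" "\<bar>r - s\<bar> < d"
    have "integrable \<nu> (\<lambda>x. (quotient_error r s x)\<^sup>2)"
      using d(2)[OF r] r assms by (intro square_integrableI) (auto intro: less_trans)
    then show "integrable \<nu> (\<lambda>x. (quotient_error r s x)\<^sup>2) \<and> (\<integral>x. (quotient_error r s x)\<^sup>2 \<partial>\<nu>) < 1"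
      using d(2)[OF r] by (simp add: nn_integral_eq_integral)
  qed
qed

lemma square_integrable_laplacian_u:
  assumes s: "0 \<le> s"
  shows "integrable \<nu> (\<lambda>x. (laplacian_m m (u s) x)\<^sup>2)"
proof -
  obtain d where d: "d > 0" "\<And>r. 0 \<le> r \<Longrightarrow> r \<noteq> s \<Longrightarrow> \<bar>r - s\<bar> < d \<Longrightarrow>
      integrable \<nu> (\<lambda>x. (quotient_error r s x)\<^sup>2)"
    using quotient_error_small[OF s] by metis
  define r where "r = s + d / 2"
  have r: "0 \<le> r" "r \<noteq> s" "\<bar>r - s\<bar> < d" using d s by (auto simp: r_def)
  have "integrable \<nu> (\<lambda>x. ((u r x - u s x) / (r - s))\<^sup>2)"
    using square_integrable_diff[of "u r" \<nu> "u s"] r s square_integrable_u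
    by (simp add: power_divide)
  then have "integrable \<nu> (\<lambda>x. ((u r x - u s x) / (r - s) - quotient_error r s x)\<^sup>2)"
    using d(2)[OF r] r s by (intro square_integrable_diff) auto
  then show ?thesis by (simp add: quotient_error_def)
qed

lemma square_u_le:
  assumes "r \<noteq> s" "\<bar>r - s\<bar> \<le> 1"
  shows "(u r x)\<^sup>2 \<le> 3 * ((u s x)\<^sup>2 + (quotient_error r s x)\<^sup>2 + (laplacian_m m (u s) x)\<^sup>2)"
proof -
  define h where "h = r - s"
  have h: "h\<^sup>2 \<le> 1" using assms by (simp add: h_def abs_square_le_1)
  have three: "(a + b + c)\<^sup>2 \<le> 3 * (a\<^sup>2 + b\<^sup>2 + c\<^sup>2)" for a b c :: real
    using sum_squares_bound[of a b] sum_squares_bound[of a c] sum_squares_bound[of b c]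
    by (simp add: power2_sum algebra_simps)
  have shrink: "(h * y)\<^sup>2 \<le> y\<^sup>2" for y
    using mult_right_mono[OF h, of "y\<^sup>2"] by (simp add: power_mult_distrib)
  have "u r x = u s x + h * quotient_error r s x + h * laplacian_m m (u s) x"
    using assms unfolding quotient_error_def h_def by (simp add: field_simps)
  then have "(u r x)\<^sup>2
      \<le> 3 * ((u s x)\<^sup>2 + (h * quotient_error r s x)\<^sup>2 + (h * laplacian_m m (u s) x)\<^sup>2)"
    using three by simp
  also have "\<dots> \<le> 3 * ((u s x)\<^sup>2 + (quotient_error r s x)\<^sup>2 + (laplacian_m m (u s) x)\<^sup>2)"
    using shrink[of "quotient_error r s x"] shrink[of "laplacian_m m (u s) x"] by simp
  finally show ?thesis .
qed

lemma L2_norm_locally_bounded: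
  assumes s: "0 \<le> s"
  shows "\<exists>d>0. \<exists>M. \<forall>r. 0 \<le> r \<and> \<bar>r - s\<bar> < d \<longrightarrow> (\<integral>x. (u r x)\<^sup>2 \<partial>\<nu>) \<le> M"
proof -
  obtain d where d: "d > 0" "\<And>r. 0 \<le> r \<Longrightarrow> r \<noteq> s \<Longrightarrow> \<bar>r - s\<bar> < d \<Longrightarrow>
      integrable \<nu> (\<lambda>x. (quotient_error r s x)\<^sup>2) \<and> (\<integral>x. (quotient_error r s x)\<^sup>2 \<partial>\<nu>) < 1"
    using quotient_error_small[OF s] by metis
  let ?L = "laplacian_m m (u s)"
  define M where "M = 3 * ((\<integral>x. (u s x)\<^sup>2 \<partial>\<nu>) + 1 + (\<integral>x. (?L x)\<^sup>2 \<partial>\<nu>))"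
  have L2: "integrable \<nu> (\<lambda>x. (?L x)\<^sup>2)" by (rule square_integrable_laplacian_u[OF s])
  have "(\<integral>x. (u r x)\<^sup>2 \<partial>\<nu>) \<le> M" if r: "0 \<le> r" "\<bar>r - s\<bar> < min d 1" for r
  proof (cases "r = s")
    case True
    then show ?thesis by (simp add: M_def integral_nonneg_AE)
  next
    case False
    note W = d(2)[OF r(1) False]
    have "(\<integral>x. (u r x)\<^sup>2 \<partial>\<nu>) \<le> (\<integral>x. 3 * ((u s x)\<^sup>2 + (quotient_error r s x)\<^sup>2 + (?L x)\<^sup>2) \<partial>\<nu>)"
      using square_integrable_u r s W L2 False
      by (intro integral_mono square_u_le) (auto simp: min_def split: if_splits)
    also have "\<dots> \<le> M"
      using square_integrable_u[OF s] W L2 r by (simp add: M_def min_def split: if_splits)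
    finally show ?thesis .
  qed
  then show ?thesis using d(1) by (intro exI[of _ "min d 1"]) auto
qed

lemma L2_norm_bounded:
  obtains B where "\<And>r. 0 \<le> r \<Longrightarrow> r \<le> t \<Longrightarrow> (\<integral>x. (u r x)\<^sup>2 \<partial>\<nu>) \<le> B"
proof -
  have "\<forall>s. \<exists>d M. 0 \<le> s \<longrightarrow> d > 0 \<and> (\<forall>r. 0 \<le> r \<and> \<bar>r - s\<bar> < d \<longrightarrow> (\<integral>x. (u r x)\<^sup>2 \<partial>\<nu>) \<le> M)"
    using L2_norm_locally_bounded by blast
  then obtain d M where d: "\<And>s. 0 \<le> s \<Longrightarrow> d s > 0"
    and M: "\<And>s r. 0 \<le> s \<Longrightarrow> 0 \<le> r \<Longrightarrow> \<bar>r - s\<bar> < d s \<Longrightarrow> (\<integral>x. (u r x)\<^sup>2 \<partial>\<nu>) \<le> M s"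
    by metis
  have cover: "{0..t} \<subseteq> (\<Union>s\<in>{0..t}. ball s (d s))"
    using d by force
  obtain C where C: "C \<subseteq> {0..t}" "finite C" "{0..t} \<subseteq> (\<Union>s\<in>C. ball s (d s))"
    using compactE_image[OF compact_Icc _ cover] by blast
  have "(\<integral>x. (u r x)\<^sup>2 \<partial>\<nu>) \<le> (\<Sum>s\<in>C. \<bar>M s\<bar>)" if r: "0 \<le> r" "r \<le> t" for r
  proof -
    obtain s where s: "s \<in> C" "r \<in> ball s (d s)" using C(3) r by force
    then have "(\<integral>x. (u r x)\<^sup>2 \<partial>\<nu>) \<le> \<bar>M s\<bar>"
      using M[of s r] C(1) r by (force simp: dist_real_def abs_minus_commute)
    also have "\<dots> \<le> (\<Sum>s\<in>C. \<bar>M s\<bar>)" by (rule member_le_sum) (use s C in auto)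
    finally show ?thesis .
  qed
  then show ?thesis by (rule that)
qed

lemma inner_quotient_error:
  fixes G :: "'a \<Rightarrow> real"
  assumes [measurable]: "G \<in> borel_measurable borel" and G2: "integrable \<nu> (\<lambda>x. (G x)\<^sup>2)"
    and r: "0 \<le> r" "r \<noteq> s" and s: "0 \<le> s"
  shows "((\<integral>x. G x * u r x \<partial>\<nu>) - (\<integral>x. G x * u s x \<partial>\<nu>)) / (r - s)
      - (\<integral>x. G x * laplacian_m m (u s) x \<partial>\<nu>) = (\<integral>x. G x * quotient_error r s x \<partial>\<nu>)"
proof -
  have Gu: "0 \<le> r \<Longrightarrow> integrable \<nu> (\<lambda>x. G x * u r x)" for r
    using G2 square_integrable_u by (intro integrable_mult_square_integrable) auto
  have GL: "integrable \<nu> (\<lambda>x. G x * laplacian_m m (u s) x)"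
    using G2 square_integrable_laplacian_u[OF s] s by (intro integrable_mult_square_integrable) auto
  have "((\<integral>x. G x * u r x \<partial>\<nu>) - (\<integral>x. G x * u s x \<partial>\<nu>)) / (r - s) - (\<integral>x. G x * laplacian_m m (u s) x \<partial>\<nu>)
      = (\<integral>x. (G x * u r x - G x * u s x) / (r - s) - G x * laplacian_m m (u s) x \<partial>\<nu>)"
    using Gu r s GL by simp
  also have "\<dots> = (\<integral>x. G x * quotient_error r s x \<partial>\<nu>)"
    by (rule Bochner_Integration.integral_cong) (auto simp: quotient_error_def field_simps)
  finally show ?thesis .
qed

lemma has_real_derivative_inner_u:
  fixes G :: "'a \<Rightarrow> real"
  assumes [measurable]: "G \<in> borel_measurable borel" and G2: "integrable \<nu> (\<lambda>x. (G x)\<^sup>2)"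
    and s: "0 \<le> s"
  shows "((\<lambda>r. \<integral>x. G x * u r x \<partial>\<nu>) has_real_derivative (\<integral>x. G x * laplacian_m m (u s) x \<partial>\<nu>))
    (at s within {0..})"
proof -
  define a where "a r = (\<integral>x. G x * u r x \<partial>\<nu>)" for r
  define D where "D = (\<integral>x. G x * laplacian_m m (u s) x \<partial>\<nu>)"
  define bound where
    "bound r = sqrt ((\<integral>x. (G x)\<^sup>2 \<partial>\<nu>) * enn2real (\<integral>\<^sup>+x. ennreal ((quotient_error r s x)\<^sup>2) \<partial>\<nu>))" for r
  obtain d where d: "d > 0" "\<And>r. 0 \<le> r \<Longrightarrow> r \<noteq> s \<Longrightarrow> \<bar>r - s\<bar> < d \<Longrightarrow>
      integrable \<nu> (\<lambda>x. (quotient_error r s x)\<^sup>2)"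
    using quotient_error_small[OF s] by metis
  have "\<forall>\<^sub>F r in at s within {0..}. norm ((a r - a s) / (r - s) - D) \<le> bound r"
    unfolding eventually_at
  proof (intro exI[of _ d] conjI ballI impI)
    fix r :: real assume r: "r \<in> {0..}" "r \<noteq> s \<and> dist r s < d"
    then have W: "integrable \<nu> (\<lambda>x. (quotient_error r s x)\<^sup>2)"
      using d(2) by (simp add: dist_real_def)
    have "(\<integral>x. G x * quotient_error r s x \<partial>\<nu>)\<^sup>2 \<le> (\<integral>x. (G x)\<^sup>2 \<partial>\<nu>) * (\<integral>x. (quotient_error r s x)\<^sup>2 \<partial>\<nu>)"
      by (rule Cauchy_Schwarz_integral) (use G2 W r s in auto)
    also have "(\<integral>x. (quotient_error r s x)\<^sup>2 \<partial>\<nu>) = enn2real (\<integral>\<^sup>+x. ennreal ((quotient_error r s x)\<^sup>2) \<partial>\<nu>)"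
      by (rule integral_eq_nn_integral) (use r s in auto)
    finally show "norm ((a r - a s) / (r - s) - D) \<le> bound r"
      using inner_quotient_error[OF _ G2, of r s] r s
      unfolding a_def D_def bound_def by (simp add: real_le_rsqrt)
  qed (rule d(1))
  moreover have "(bound \<longlongrightarrow> 0) (at s within {0..})"
  proof -
    have "((\<lambda>r. \<integral>\<^sup>+x. ennreal ((quotient_error r s x)\<^sup>2) \<partial>\<nu>) \<longlongrightarrow> 0) (at s within {0..})"
      using heat_flow s unfolding heat_flow_def quotient_error_def by simp
    then have "(bound \<longlongrightarrow> sqrt ((\<integral>x. (G x)\<^sup>2 \<partial>\<nu>) * enn2real 0)) (at s within {0..})"
      unfolding bound_def by (intro tendsto_intros) auto
    then show ?thesis by simp
  qed
  ultimately have "((\<lambda>r. (a r - a s) / (r - s) - D) \<longlongrightarrow> 0) (at s within {0..})"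
    by (rule Lim_null_comparison)
  then show ?thesis
    unfolding has_field_derivative_iff a_def D_def by (simp add: Lim_null[symmetric])
qed

lemma has_real_derivative_exp_inner_transition_prob:
  assumes E: "E \<in> sets borel" "emeasure \<nu> E < \<infinity>" and s: "0 \<le> s"
  shows "((\<lambda>r. exp r * (\<integral>x. transition_prob E j x * u r x \<partial>\<nu>)) has_real_derivative
          exp s * (\<integral>x. transition_prob E (Suc j) x * u s x \<partial>\<nu>)) (at s within {0..})"
proof -
  have eq: "(\<integral>x. transition_prob E j x * laplacian_m m (u s) x \<partial>\<nu>)
      = (\<integral>x. transition_prob E (Suc j) x * u s x \<partial>\<nu>) - (\<integral>x. transition_prob E j x * u s x \<partial>\<nu>)"
    using E s square_integrable_transition_prob[OF E] square_integrable_u[OF s]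
    by (intro integral_mult_laplacian transition_prob_Suc)
      (auto simp: transition_prob_nonneg transition_prob_le_1)
  have deriv: "((\<lambda>r. \<integral>x. transition_prob E j x * u r x \<partial>\<nu>) has_real_derivative
      (\<integral>x. transition_prob E j x * laplacian_m m (u s) x \<partial>\<nu>)) (at s within {0..})"
    using E s square_integrable_transition_prob[OF E] by (intro has_real_derivative_inner_u) auto
  show ?thesis
    using DERIV_mult[OF has_field_derivative_at_within[OF DERIV_exp] deriv] unfolding eq
    by (simp add: algebra_simps)
qed

lemma exp_inner_transition_prob_bounded:
  assumes E: "E \<in> sets borel" "emeasure \<nu> E < \<infinity>"
  obtains C where "\<And>j s. 0 \<le> s \<Longrightarrow> s \<le> t \<Longrightarrow> \<bar>exp s * (\<integral>x. transition_prob E j x * u s x \<partial>\<nu>)\<bar> \<le> C"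
proof -
  obtain B where B: "\<And>r. 0 \<le> r \<Longrightarrow> r \<le> t \<Longrightarrow> (\<integral>x. (u r x)\<^sup>2 \<partial>\<nu>) \<le> B"
    using L2_norm_bounded by blast
  have "\<bar>exp s * (\<integral>x. transition_prob E j x * u s x \<partial>\<nu>)\<bar> \<le> exp t * sqrt (measure \<nu> E * B)"
    if s: "0 \<le> s" "s \<le> t" for j s
  proof -
    have "(\<integral>x. transition_prob E j x * u s x \<partial>\<nu>)\<^sup>2
        \<le> (\<integral>x. (transition_prob E j x)\<^sup>2 \<partial>\<nu>) * (\<integral>x. (u s x)\<^sup>2 \<partial>\<nu>)"
      using E square_integrable_transition_prob[OF E] square_integrable_u s
      by (intro Cauchy_Schwarz_integral) auto
    also have "\<dots> \<le> measure \<nu> E * B"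
      using square_integrable_transition_prob[OF E] B s by (intro mult_mono) (auto simp: integral_nonneg_AE)
    finally have "\<bar>\<integral>x. transition_prob E j x * u s x \<partial>\<nu>\<bar> \<le> sqrt (measure \<nu> E * B)"
      by (simp add: real_le_rsqrt)
    then show ?thesis
      using s by (simp add: abs_mult) (intro mult_mono; simp)
  qed
  then show ?thesis by (rule that)
qed

lemma AE_u_pos_if_N_set_null:
  assumes D: "D \<in> sets borel" "emeasure \<nu> (N_set m D) = 0"
    and u0_nonneg: "AE x in \<nu>. 0 \<le> u0 x" and u0_pos: "\<And>x. x \<in> D \<Longrightarrow> 0 < u0 x" and t: "0 < t"
  shows "AE x in \<nu>. 0 < u t x"
proof (rule ccontr)
  assume "\<not> (AE x in \<nu>. 0 < u t x)"
  moreover have [measurable]: "u t \<in> borel_measurable borel" using t by simp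
  ultimately have "emeasure \<nu> {x. u t x \<le> 0} \<noteq> 0"
    by (simp add: AE_iff_measurable[of "{x. u t x \<le> 0}" \<nu>] not_less)
  then obtain E where E: "E \<in> sets borel" "E \<subseteq> {x. u t x \<le> 0}" "emeasure \<nu> E \<noteq> 0"
      "emeasure \<nu> E < \<infinity>"
    using exists_finite_measure_subset[of "{x. u t x \<le> 0}"] by auto
  obtain j0 where j0: "(\<integral>\<^sup>+x. indicator D x * emeasure (mstar m j0 x) E \<partial>\<nu>) \<noteq> 0"
    using exists_mstar_reaching[OF D E(1,3)] .
  define k where "k j s = exp s * (\<integral>x. transition_prob E j x * u s x \<partial>\<nu>)" for j s
  obtain C where "\<And>j s. 0 \<le> s \<Longrightarrow> s \<le> t \<Longrightarrow> \<bar>k j s\<bar> \<le> C"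
    using exp_inner_transition_prob_bounded[OF E(1,4)] unfolding k_def by blast
  moreover have "\<And>j s. 0 \<le> s \<Longrightarrow> (k j has_real_derivative k (Suc j) s) (at s within {0..})"
    unfolding k_def[abs_def] by (rule has_real_derivative_exp_inner_transition_prob[OF E(1,4)])
  moreover have "0 \<le> k j 0" for j
    using u0_nonneg AE_u_0
    by (auto simp: k_def transition_prob_nonneg intro!: integral_nonneg_AE elim!: AE_mp)
  moreover have "0 < k j0 0"
    using u0_pos u0_nonneg AE_u_0 E
    by (auto simp: k_def intro!: integral_transition_prob_pos[OF _ _ _ D(1) _ _ _ j0] square_integrable_u
        elim!: AE_mp)
  ultimately have "0 < k 0 t" using t by (rule derivative_chain_pos)
  moreover have "k 0 t \<le> 0"
  proof -
    have "0 \<le> (\<integral>x. - (transition_prob E 0 x * u t x) \<partial>\<nu>)"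
      using E(1,2) by (intro integral_nonneg_AE) (auto simp: transition_prob_0 indicator_def)
    then show ?thesis by (simp add: k_def mult_nonneg_nonpos)
  qed
  ultimately show False by simp
qed

end

section \<open>An explicit heat flow\<close>

definition exp_series :: "(nat \<Rightarrow> real) \<Rightarrow> real \<Rightarrow> real" where
  "exp_series b t = (\<Sum>n. t^n / fact n * b n)"

definition poisson_mean :: "(nat \<Rightarrow> real) \<Rightarrow> real \<Rightarrow> real" where
  "poisson_mean b t = exp (- t) * exp_series b t"

definition forward_diff :: "(nat \<Rightarrow> real) \<Rightarrow> nat \<Rightarrow> real" where
  "forward_diff b n = b (Suc n) - b n"

lemma exp_sums_real: "(\<lambda>n. t^n / fact n) sums exp (t::real)"
  using exp_converges[of t] by (simp add: divide_inverse mult.commute scaleR_conv_of_real)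

lemma summable_norm_exp_series:
  fixes b :: "nat \<Rightarrow> real"
  assumes "\<And>n. \<bar>b n\<bar> \<le> B"
  shows "summable (\<lambda>n. norm (t^n / fact n * b n))"
proof (rule summable_comparison_test'[where g="\<lambda>n. B * (\<bar>t\<bar>^n / fact n)" and N=0])
  show "summable (\<lambda>n. B * (\<bar>t\<bar>^n / fact n))"
    using exp_sums_real[of "\<bar>t\<bar>"] by (intro summable_mult) (simp add: sums_summable)
  fix n
  have "\<bar>t^n / fact n * b n\<bar> = \<bar>t\<bar>^n / fact n * \<bar>b n\<bar>" by (simp add: abs_mult power_abs)
  also have "\<dots> \<le> \<bar>t\<bar>^n / fact n * B" by (rule mult_left_mono) (use assms in auto)
  finally show "norm (norm (t^n / fact n * b n)) \<le> B * (\<bar>t\<bar>^n / fact n)" by (simp add: mult.commute)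
qed

lemma summable_exp_series:
  fixes b :: "nat \<Rightarrow> real"
  assumes "\<And>n. \<bar>b n\<bar> \<le> B"
  shows "summable (\<lambda>n. t^n / fact n * b n)"
  using summable_norm_exp_series[OF assms] by (rule summable_norm_cancel)

lemma exp_series_0 [simp]: "exp_series b 0 = b 0"
  using powser_zero[of "\<lambda>n. b n / fact n"] by (simp add: exp_series_def mult.commute)

lemma exp_series_shift_diff:
  assumes "\<And>n. \<bar>b n\<bar> \<le> B"
  shows "exp_series (\<lambda>n. b (Suc n)) t - exp_series b t = exp_series (forward_diff b) t"
proof -
  have "summable (\<lambda>n. t^n / fact n * b (Suc n))" "summable (\<lambda>n. t^n / fact n * b n)"
    by (rule summable_exp_series, rule assms)+
  then show ?thesis
    unfolding exp_series_def forward_diff_def by (simp add: suminf_diff right_diff_distrib)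
qed

lemma exp_series_nonneg:
  "(\<And>n. 0 \<le> b n) \<Longrightarrow> (\<And>n. \<bar>b n\<bar> \<le> B) \<Longrightarrow> 0 \<le> t \<Longrightarrow> 0 \<le> exp_series b t"
  unfolding exp_series_def by (intro suminf_nonneg summable_exp_series) auto

lemma exp_series_le_exp:
  assumes "\<And>n. \<bar>b n\<bar> \<le> B" "0 \<le> t"
  shows "exp_series b t \<le> B * exp t"
proof -
  have "exp_series b t \<le> (\<Sum>n. t^n / fact n * B)"
    unfolding exp_series_def
  proof (rule suminf_le)
    show "t^n / fact n * b n \<le> t^n / fact n * B" for n
      using assms by (intro mult_left_mono) (auto simp: abs_le_iff)
    show "summable (\<lambda>n. t^n / fact n * b n)" by (rule summable_exp_series) (rule assms)
    show "summable (\<lambda>n. t^n / fact n * B)" by (rule summable_exp_series[where B="\<bar>B\<bar>"]) simp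
  qed
  also have "(\<Sum>n. t^n / fact n * B) = exp t * B"
    using sums_mult2[OF exp_sums_real[of t], of B] by (simp add: sums_iff)
  finally show ?thesis by (simp add: mult.commute)
qed

lemma abs_exp_series_le:
  assumes d: "\<And>n. \<bar>d n\<bar> \<le> c n" and c: "\<And>n. \<bar>c n\<bar> \<le> B" and \<xi>: "0 \<le> \<xi>" "\<xi> \<le> T"
  shows "\<bar>exp_series d \<xi>\<bar> \<le> exp_series c T"
proof -
  have le: "\<bar>\<xi>^n / fact n * d n\<bar> \<le> T^n / fact n * c n" for n
    using \<xi> d[of n] by (auto simp: abs_mult intro!: mult_mono divide_right_mono power_mono)
  have sc: "summable (\<lambda>n. T^n / fact n * c n)" by (rule summable_exp_series) (rule c)
  have sa: "summable (\<lambda>n. \<bar>\<xi>^n / fact n * d n\<bar>)"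
    by (rule summable_comparison_test'[OF sc, of 0]) (use le in auto)
  have "\<bar>exp_series d \<xi>\<bar> \<le> (\<Sum>n. \<bar>\<xi>^n / fact n * d n\<bar>)"
    unfolding exp_series_def by (rule summable_rabs[OF sa])
  also have "\<dots> \<le> exp_series c T" unfolding exp_series_def by (rule suminf_le[OF le sa sc])
  finally show ?thesis .
qed

lemma has_real_derivative_exp_series:
  assumes "\<And>n. \<bar>b n\<bar> \<le> B"
  shows "(exp_series b has_real_derivative exp_series (\<lambda>n. b (Suc n)) t) (at t)"
proof -
  define c where "c n = b n / fact n" for n
  have series: "exp_series b = (\<lambda>x. \<Sum>n. c n * x^n)"
    unfolding exp_series_def c_def by (rule ext) (simp add: mult.commute)
  have deriv: "((\<lambda>x. \<Sum>n. c n * x^n) has_real_derivative (\<Sum>n. diffs c n * t^n)) (at t)"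
  proof (rule termdiffs_strong_converges_everywhere)
    fix y
    have "summable (\<lambda>n. y^n / fact n * b n)" by (rule summable_exp_series) (rule assms)
    then show "summable (\<lambda>n. c n * y^n)" by (simp add: c_def mult.commute)
  qed
  have "(\<lambda>n. diffs c n * t^n) = (\<lambda>n. t^n / fact n * b (Suc n))"
    unfolding diffs_def c_def by (rule ext) (simp add: fact_Suc field_simps del: of_nat_Suc)
  then have "(\<Sum>n. diffs c n * t^n) = exp_series (\<lambda>n. b (Suc n)) t"
    by (simp add: exp_series_def)
  with deriv show ?thesis unfolding series by simp
qed

lemma has_real_derivative_poisson_mean:
  assumes "\<And>n. \<bar>b n\<bar> \<le> B"
  shows "(poisson_mean b has_real_derivative poisson_mean (forward_diff b) t) (at t)"
proof -
  have "((\<lambda>t. exp (- t) * exp_series b t) has_real_derivative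
      exp (- t) * (- 1) * exp_series b t + exp (- t) * exp_series (\<lambda>n. b (Suc n)) t) (at t)"
  proof -
    have "(exp_series b has_real_derivative exp_series (\<lambda>n. b (Suc n)) t) (at t)"
      by (rule has_real_derivative_exp_series) (rule assms)
    then show ?thesis by (auto intro!: derivative_eq_intros)
  qed
  moreover have "exp_series (\<lambda>n. b (Suc n)) t - exp_series b t = exp_series (forward_diff b) t"
    by (rule exp_series_shift_diff) (rule assms)
  ultimately show ?thesis
    unfolding poisson_mean_def[abs_def] by (simp add: algebra_simps)
qed

lemma abs_forward_diff_le:
  assumes "\<And>n. \<bar>b n\<bar> \<le> B"
  shows "\<bar>forward_diff b n\<bar> \<le> 2 * B"
  using assms[of n] assms[of "Suc n"] unfolding forward_diff_def by (auto simp: abs_le_iff)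

lemma abs_forward_diff_funpow_le:
  assumes "\<And>n. \<bar>b n\<bar> \<le> B"
  shows "\<bar>(forward_diff ^^ k) b n\<bar> \<le> 2^k * B"
proof (induction k arbitrary: n)
  case (Suc k)
  then show ?case using abs_forward_diff_le[of "(forward_diff ^^ k) b" "2^k * B" n] by simp
qed (use assms in simp)

lemma poisson_mean_taylor:
  assumes b: "\<And>n. \<bar>b n\<bar> \<le> B" and st: "s \<noteq> t"
  obtains \<xi> where "min s t \<le> \<xi>" "\<xi> \<le> max s t"
    "poisson_mean b s = poisson_mean b t + poisson_mean (forward_diff b) t * (s - t)
      + poisson_mean (forward_diff (forward_diff b)) \<xi> / 2 * (s - t)\<^sup>2"
proof -
  define diff where "diff k = poisson_mean ((forward_diff ^^ k) b)" for k
  have "\<exists>\<xi>. (if s < t then s < \<xi> \<and> \<xi> < t else t < \<xi> \<and> \<xi> < s) \<and>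
     poisson_mean b s = (\<Sum>k<2. diff k t / fact k * (s - t)^k) + diff 2 \<xi> / fact 2 * (s - t)^2"
  proof (rule Taylor[where a="min s t" and b="max s t"])
    show "\<forall>k x. k < 2 \<and> min s t \<le> x \<and> x \<le> max s t \<longrightarrow> DERIV (diff k) x :> diff (Suc k) x"
      unfolding diff_def
      using has_real_derivative_poisson_mean[OF abs_forward_diff_funpow_le[OF b]] by simp
  qed (use st in \<open>auto simp: diff_def\<close>)
  then obtain \<xi> where "(if s < t then s < \<xi> \<and> \<xi> < t else t < \<xi> \<and> \<xi> < s)"
    "poisson_mean b s = (\<Sum>k<2. diff k t / fact k * (s - t)^k) + diff 2 \<xi> / fact 2 * (s - t)^2"
    by blast
  then show ?thesis
    by (intro that[of \<xi>]) (auto simp: diff_def numeral_2_eq_2 split: if_splits)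
qed

lemma nn_integral_exp_series_le:
  fixes b :: "nat \<Rightarrow> 'b \<Rightarrow> real"
  assumes [measurable]: "\<And>n. b n \<in> borel_measurable M"
    and b: "\<And>n x. 0 \<le> b n x" "\<And>n x. b n x \<le> B"
    and int: "\<And>n. (\<integral>\<^sup>+ x. ennreal (b n x) \<partial>M) \<le> V" and T: "0 \<le> T"
  shows "(\<integral>\<^sup>+x. ennreal (exp_series (\<lambda>n. b n x) T) \<partial>M) \<le> ennreal (exp T) * V"
proof -
  have "ennreal (exp_series (\<lambda>n. b n x) T) = (\<Sum>n. ennreal (T^n / fact n) * ennreal (b n x))" for x
  proof -
    have "summable (\<lambda>n. T^n / fact n * b n x)"
      by (rule summable_exp_series[where B=B]) (use b in \<open>simp add: abs_le_iff\<close>)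
    then show ?thesis
      unfolding exp_series_def using b T by (simp add: suminf_ennreal2 ennreal_mult[symmetric])
  qed
  then have "(\<integral>\<^sup>+x. ennreal (exp_series (\<lambda>n. b n x) T) \<partial>M)
      = (\<Sum>n. (\<integral>\<^sup>+x. ennreal (T^n / fact n) * ennreal (b n x) \<partial>M))"
    by (simp add: nn_integral_suminf)
  also have "\<dots> \<le> (\<Sum>n. ennreal (T^n / fact n) * V)"
    by (intro suminf_le summableI) (simp_all add: nn_integral_cmult mult_left_mono int)
  also have "\<dots> = (\<Sum>n. ennreal (T^n / fact n)) * V"
    using ennreal_suminf_cmult[of V "\<lambda>n. ennreal (T^n / fact n)"] by (simp add: mult.commute)
  also have "(\<Sum>n. ennreal (T^n / fact n)) = ennreal (exp T)"
    by (rule suminf_ennreal_eq[OF _ exp_sums_real]) (use T in simp)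
  finally show ?thesis .
qed

locale poisson_construction = reversible_random_walk +
  fixes D :: "'a set" and u0 :: "'a \<Rightarrow> real"
  assumes D: "D \<in> sets borel" and D_finite: "emeasure \<nu> D < \<infinity>"
    and measurable_u0 [measurable]: "u0 \<in> borel_measurable borel"
    and u0_nonneg: "\<And>x. 0 \<le> u0 x" and u0_le_indicator: "\<And>x. u0 x \<le> indicator D x"
begin

definition walk_average :: "nat \<Rightarrow> 'a \<Rightarrow> real" where
  "walk_average n x = (\<integral>y. u0 y \<partial>mstar m n x)"

(* With the Markov operator P f x = integral of f over m_x we have Delta_m = P - I, so the
   heat flow is exp(t Delta_m) u0 = exp(-t) * sum_n t^n/n! * P^n u0, the Poisson average of the
   walk averages P^n u0. *)

definition flow :: "real \<Rightarrow> 'a \<Rightarrow> real" where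
  "flow t x = poisson_mean (\<lambda>n. walk_average n x) t"

lemma u0_le_1: "u0 x \<le> 1"
  using u0_le_indicator[of x] by (cases "x \<in> D") auto

lemma measurable_walk_average [measurable]: "walk_average n \<in> borel_measurable borel"
  unfolding walk_average_def[abs_def]
  by (rule measurable_compose[OF mstar_in_subprob_algebra integral_measurable_subprob_algebra]) simp

lemma integrable_mstar_u0: "integrable (mstar m n x) u0"
  using u0_nonneg u0_le_1 by (intro prob_space_integrable_bounded[OF prob_space_mstar, where B=1]) auto

lemma walk_average_nonneg: "0 \<le> walk_average n x"
  unfolding walk_average_def using u0_nonneg by (simp add: integral_nonneg_AE)

lemma walk_average_le_measure: "walk_average n x \<le> measure (mstar m n x) D"
proof -
  interpret prob_space "mstar m n x" by (rule prob_space_mstar)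
  have "walk_average n x \<le> (\<integral>y. indicator D y \<partial>mstar m n x)"
    unfolding walk_average_def using D u0_le_indicator
    by (intro integral_mono integrable_mstar_u0 integrable_real_indicator) (auto simp: less_top[symmetric])
  then show ?thesis using D by simp
qed

lemma walk_average_le_1: "walk_average n x \<le> 1"
  using walk_average_le_measure[of n x] prob_space.prob_le_1[OF prob_space_mstar] by (rule order_trans)

lemma abs_walk_average_le_1: "\<bar>walk_average n x\<bar> \<le> 1"
  using walk_average_nonneg walk_average_le_1 by simp

lemma walk_average_0: "walk_average 0 x = u0 x"
  unfolding walk_average_def by (simp add: integral_return)

lemma walk_average_Suc: "walk_average (Suc n) x = (\<integral>y. walk_average n y \<partial>m x)"
proof -
  have "(\<integral>y. u0 y \<partial>(m x \<bind> mstar m n)) = (\<integral>y. (\<integral>z. u0 z \<partial>mstar m n y) \<partial>m x)"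
  proof (rule integral_bind[where K=borel and B=1 and B'=1])
    show "finite_measure (m x)" using prob_space_m[of x] by (simp add: prob_space_def)
    show "AE y in m x. emeasure (mstar m n y) (space (mstar m n y)) \<le> ennreal 1"
      using prob_space.emeasure_space_1[OF prob_space_mstar] by simp
  qed (use u0_nonneg u0_le_1 in \<open>auto simp: abs_le_iff\<close>)
  then show ?thesis unfolding walk_average_def by (simp add: mstar_Suc_first)
qed

lemma nn_integral_walk_average_le: "(\<integral>\<^sup>+x. ennreal (walk_average n x) \<partial>\<nu>) \<le> emeasure \<nu> D"
proof -
  have "ennreal (walk_average n x) = (\<integral>\<^sup>+y. ennreal (u0 y) \<partial>mstar m n x)" for x
    unfolding walk_average_def using u0_nonneg
    by (intro nn_integral_eq_integral[OF integrable_mstar_u0, symmetric]) simp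
  then have "(\<integral>\<^sup>+x. ennreal (walk_average n x) \<partial>\<nu>) = (\<integral>\<^sup>+x. ennreal (u0 x) \<partial>\<nu>)"
    by (simp add: nn_integral_mstar_invariant)
  also have "\<dots> \<le> (\<integral>\<^sup>+x. indicator D x \<partial>\<nu>)"
  proof (rule nn_integral_mono)
    fix x show "ennreal (u0 x) \<le> indicator D x"
      using u0_le_indicator[of x] u0_le_1[of x] u0_nonneg[of x]
      by (cases "x \<in> D") (auto intro: ennreal_leI)
  qed
  finally show ?thesis using D by simp
qed

lemma measurable_flow [measurable]: "flow t \<in> borel_measurable borel"
  unfolding flow_def[abs_def] poisson_mean_def exp_series_def by measurable

lemma flow_0: "flow 0 x = u0 x"
  by (simp add: flow_def poisson_mean_def walk_average_0)

lemma flow_bounds: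
  assumes "0 \<le> t"
  shows "0 \<le> flow t x" "flow t x \<le> 1" "flow t x \<le> exp_series (\<lambda>n. walk_average n x) t"
proof -
  have s: "0 \<le> exp_series (\<lambda>n. walk_average n x) t" "exp_series (\<lambda>n. walk_average n x) t \<le> exp t"
    using exp_series_nonneg[of "\<lambda>n. walk_average n x" 1 t] exp_series_le_exp[of "\<lambda>n. walk_average n x" 1 t]
      walk_average_nonneg abs_walk_average_le_1 assms by auto
  then show "0 \<le> flow t x" by (simp add: flow_def poisson_mean_def)
  have "exp (- t) * exp_series (\<lambda>n. walk_average n x) t \<le> exp (- t) * exp t"
    using s by (intro mult_left_mono) auto
  then show "flow t x \<le> 1" by (simp add: flow_def poisson_mean_def exp_minus field_simps)
  show "flow t x \<le> exp_series (\<lambda>n. walk_average n x) t"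
    using assms s mult_right_mono[of "exp (- t)" 1 "exp_series (\<lambda>n. walk_average n x) t"]
    by (simp add: flow_def poisson_mean_def)
qed

lemma square_integrable_flow:
  assumes t: "0 \<le> t"
  shows "integrable \<nu> (\<lambda>x. (flow t x)\<^sup>2)"
proof (rule square_integrableI)
  have "(\<integral>\<^sup>+x. ennreal ((flow t x)\<^sup>2) \<partial>\<nu>) \<le> (\<integral>\<^sup>+x. ennreal (exp_series (\<lambda>n. walk_average n x) t) \<partial>\<nu>)"
    using flow_bounds[OF t] order_trans[OF _ flow_bounds(3)[OF t]]
    by (intro nn_integral_mono ennreal_leI) (simp add: power2_eq_square mult_left_le)
  also have "\<dots> \<le> ennreal (exp t) * emeasure \<nu> D"
    using walk_average_nonneg walk_average_le_1 nn_integral_walk_average_le t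
    by (intro nn_integral_exp_series_le[where B=1]) auto
  also have "\<dots> < \<infinity>" using D_finite by (simp add: ennreal_mult_less_top less_top)
  finally show "(\<integral>\<^sup>+x. ennreal ((flow t x)\<^sup>2) \<partial>\<nu>) < \<infinity>" .
qed simp

lemma integral_m_exp_series_walk_average:
  "(\<integral>y. exp_series (\<lambda>n. walk_average n y) t \<partial>m x) = exp_series (\<lambda>n. walk_average (Suc n) x) t"
proof -
  have integrable: "integrable (m x) (walk_average n)" for n
    using abs_walk_average_le_1 by (intro prob_space_integrable_bounded[OF prob_space_m]) auto
  have norm_integral: "(\<integral>y. norm (t^n / fact n * walk_average n y) \<partial>m x) = norm (t^n / fact n * walk_average (Suc n) x)"
    for n
    by (simp add: abs_mult walk_average_nonneg walk_average_Suc)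
  have "(\<integral>y. exp_series (\<lambda>n. walk_average n y) t \<partial>m x) = (\<Sum>n. (\<integral>y. t^n / fact n * walk_average n y \<partial>m x))"
    unfolding exp_series_def
  proof (rule integral_suminf)
    show "AE y in m x. summable (\<lambda>n. norm (t^n / fact n * walk_average n y))"
      using abs_walk_average_le_1 by (intro AE_I2 summable_norm_exp_series) auto
    show "summable (\<lambda>n. \<integral>y. norm (t^n / fact n * walk_average n y) \<partial>m x)"
      unfolding norm_integral using abs_walk_average_le_1 by (intro summable_norm_exp_series) auto
  qed (simp add: integrable)
  then show ?thesis by (simp add: exp_series_def walk_average_Suc)
qed

lemma laplacian_flow:
  assumes t: "0 \<le> t"
  shows "laplacian_m m (flow t) x = poisson_mean (forward_diff (\<lambda>n. walk_average n x)) t"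
proof -
  have "integrable (m x) (flow t)"
    using flow_bounds[OF t] by (intro prob_space_integrable_bounded[OF prob_space_m, where B=1]) auto
  then have "laplacian_m m (flow t) x = (\<integral>y. flow t y \<partial>m x) - flow t x"
    by (rule laplacian_eq)
  also have "\<dots> = exp (- t) * (exp_series (\<lambda>n. walk_average (Suc n) x) t - exp_series (\<lambda>n. walk_average n x) t)"
    by (simp add: flow_def poisson_mean_def integral_m_exp_series_walk_average right_diff_distrib)
  also have "\<dots> = poisson_mean (forward_diff (\<lambda>n. walk_average n x)) t"
    using exp_series_shift_diff[of "\<lambda>n. walk_average n x" 1 t] abs_walk_average_le_1
    by (simp add: poisson_mean_def)
  finally show ?thesis .
qed

(* Dominates the second forward difference P^(n+2) u0 - 2 P^(n+1) u0 + P^n u0 that appears in the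
   Taylor remainder of the flow, and is integrable because every P^n u0 is. *)

definition second_diff_majorant :: "real \<Rightarrow> 'a \<Rightarrow> real" where
  "second_diff_majorant T x =
    exp_series (\<lambda>n. walk_average (Suc (Suc n)) x + 2 * walk_average (Suc n) x + walk_average n x) T"

lemma measurable_second_diff_majorant [measurable]: "second_diff_majorant T \<in> borel_measurable borel"
  unfolding second_diff_majorant_def[abs_def] exp_series_def by measurable

lemma majorant_coefficient_bounds:
  "0 \<le> walk_average (Suc (Suc n)) x + 2 * walk_average (Suc n) x + walk_average n x"
  "walk_average (Suc (Suc n)) x + 2 * walk_average (Suc n) x + walk_average n x \<le> 4"
  using walk_average_nonneg[of _ x] walk_average_le_1[of _ x] by (smt (verit))+

lemma second_diff_majorant_bounds:
  assumes "0 \<le> T"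
  shows "0 \<le> second_diff_majorant T x" "second_diff_majorant T x \<le> 4 * exp T"
  unfolding second_diff_majorant_def using majorant_coefficient_bounds assms
  by (auto intro!: exp_series_nonneg[where B=4] exp_series_le_exp simp: abs_le_iff)

lemma nn_integral_second_diff_majorant_le:
  assumes "0 \<le> T"
  shows "(\<integral>\<^sup>+x. ennreal (second_diff_majorant T x) \<partial>\<nu>) \<le> ennreal (exp T) * (4 * emeasure \<nu> D)"
  unfolding second_diff_majorant_def
proof (rule nn_integral_exp_series_le[where B=4])
  fix n
  have "(\<integral>\<^sup>+x. ennreal (walk_average (Suc (Suc n)) x + 2 * walk_average (Suc n) x + walk_average n x) \<partial>\<nu>)
      = (\<integral>\<^sup>+x. ennreal (walk_average (Suc (Suc n)) x) \<partial>\<nu>) + 2 * (\<integral>\<^sup>+x. ennreal (walk_average (Suc n) x) \<partial>\<nu>)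
        + (\<integral>\<^sup>+x. ennreal (walk_average n x) \<partial>\<nu>)"
    by (simp add: walk_average_nonneg ennreal_plus ennreal_mult nn_integral_add nn_integral_cmult)
  also have "\<dots> \<le> emeasure \<nu> D + 2 * emeasure \<nu> D + emeasure \<nu> D"
    by (intro add_mono mult_left_mono nn_integral_walk_average_le) auto
  also have "\<dots> = (1 + 2 + 1) * emeasure \<nu> D"
    by (simp only: distrib_right mult.left_neutral)
  also have "(1 + 2 + 1 :: ennreal) = 4" by simp
  finally show "(\<integral>\<^sup>+x. ennreal (walk_average (Suc (Suc n)) x + 2 * walk_average (Suc n) x + walk_average n x) \<partial>\<nu>)
      \<le> 4 * emeasure \<nu> D" .
qed (use majorant_coefficient_bounds assms in auto)

lemma flow_quotient_error_bound:
  assumes t: "0 \<le> t" and s: "0 \<le> s" "s \<noteq> t" "\<bar>s - t\<bar> < 1"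
  shows "((flow s x - flow t x) / (s - t) - laplacian_m m (flow t) x)\<^sup>2
    \<le> (s - t)\<^sup>2 * exp (t + 1) * second_diff_majorant (t + 1) x"
proof -
  define b where "b n = walk_average n x" for n
  define H where "H = second_diff_majorant (t + 1) x"
  obtain \<xi> where \<xi>: "min s t \<le> \<xi>" "\<xi> \<le> max s t"
    "poisson_mean b s = poisson_mean b t + poisson_mean (forward_diff b) t * (s - t)
      + poisson_mean (forward_diff (forward_diff b)) \<xi> / 2 * (s - t)\<^sup>2"
    using poisson_mean_taylor[of b 1 s t] abs_walk_average_le_1 s by (auto simp: b_def)
  let ?R = "poisson_mean (forward_diff (forward_diff b)) \<xi>"
  have error: "(flow s x - flow t x) / (s - t) - laplacian_m m (flow t) x = ?R / 2 * (s - t)"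
    using \<xi>(3) s(2) unfolding laplacian_flow[OF t] flow_def b_def[symmetric]
    by (simp add: field_simps power2_eq_square)
  have "\<bar>forward_diff (forward_diff b) n\<bar>
      \<le> walk_average (Suc (Suc n)) x + 2 * walk_average (Suc n) x + walk_average n x" for n
    using walk_average_nonneg[of n x] walk_average_nonneg[of "Suc n" x] walk_average_nonneg[of "Suc (Suc n)" x]
    by (simp add: forward_diff_def b_def abs_le_iff)
  then have "\<bar>exp_series (forward_diff (forward_diff b)) \<xi>\<bar> \<le> H"
    unfolding H_def second_diff_majorant_def using \<xi>(1,2) s t
    by (intro abs_exp_series_le[where B=4]) (auto simp: abs_le_iff majorant_coefficient_bounds)
  moreover have "\<bar>?R\<bar> \<le> \<bar>exp_series (forward_diff (forward_diff b)) \<xi>\<bar>"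
    using \<xi>(1,2) s t by (simp add: poisson_mean_def abs_mult mult_left_le_one_le)
  ultimately have R: "\<bar>?R\<bar> \<le> H" by linarith
  have H: "0 \<le> H" "H \<le> 4 * exp (t + 1)"
    unfolding H_def using second_diff_majorant_bounds t by auto
  have "(?R / 2 * (s - t))\<^sup>2 = ?R\<^sup>2 / 4 * (s - t)\<^sup>2"
    by (simp add: power2_eq_square field_simps)
  also have "\<dots> \<le> H\<^sup>2 / 4 * (s - t)\<^sup>2"
    using power_mono[OF R, of 2] by (intro mult_right_mono divide_right_mono) auto
  also have "\<dots> \<le> exp (t + 1) * H * (s - t)\<^sup>2"
    using mult_right_mono[OF H(2) H(1)] by (intro mult_right_mono) (auto simp: power2_eq_square)
  finally show ?thesis unfolding error H_def by (simp add: mult_ac)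
qed

lemma nn_integral_flow_quotient_error_le:
  assumes t: "0 \<le> t" and s: "0 \<le> s" "s \<noteq> t" "\<bar>s - t\<bar> < 1"
  shows "(\<integral>\<^sup>+x. ennreal (((flow s x - flow t x) / (s - t) - laplacian_m m (flow t) x)\<^sup>2) \<partial>\<nu>)
    \<le> ennreal (exp (t + 1)) * (ennreal (exp (t + 1)) * (4 * emeasure \<nu> D)) * ennreal ((s - t)\<^sup>2)"
proof -
  have "(\<integral>\<^sup>+x. ennreal (((flow s x - flow t x) / (s - t) - laplacian_m m (flow t) x)\<^sup>2) \<partial>\<nu>)
      \<le> (\<integral>\<^sup>+x. ennreal ((s - t)\<^sup>2 * exp (t + 1)) * ennreal (second_diff_majorant (t + 1) x) \<partial>\<nu>)"
    using flow_quotient_error_bound[OF assms] second_diff_majorant_bounds t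
    by (intro nn_integral_mono) (simp add: ennreal_mult[symmetric] ennreal_leI)
  also have "\<dots> = ennreal ((s - t)\<^sup>2 * exp (t + 1)) * (\<integral>\<^sup>+x. ennreal (second_diff_majorant (t + 1) x) \<partial>\<nu>)"
    by (rule nn_integral_cmult) simp
  also have "\<dots> \<le> ennreal ((s - t)\<^sup>2 * exp (t + 1)) * (ennreal (exp (t + 1)) * (4 * emeasure \<nu> D))"
    using t by (intro mult_left_mono nn_integral_second_diff_majorant_le) auto
  finally show ?thesis by (simp add: ennreal_mult mult_ac)
qed

lemma heat_flow_flow: "heat_flow m \<nu> u0 flow"
  unfolding heat_flow_def L2_fun_def
proof (intro conjI allI impI)
  fix t :: real assume t: "0 \<le> t"
  define F where
    "F s = (\<integral>\<^sup>+x. ennreal (((flow s x - flow t x) / (s - t) - laplacian_m m (flow t) x)\<^sup>2) \<partial>\<nu>)" for s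
  define K where "K = ennreal (exp (t + 1)) * (ennreal (exp (t + 1)) * (4 * emeasure \<nu> D))"
  have bound: "\<forall>\<^sub>F s in at t within {0..}. F s \<le> K * ennreal ((s - t)\<^sup>2)"
    unfolding eventually_at
  proof (intro exI[of _ 1] conjI ballI impI)
    fix s :: real assume "s \<in> {0..}" "s \<noteq> t \<and> dist s t < 1"
    then show "F s \<le> K * ennreal ((s - t)\<^sup>2)"
      unfolding F_def K_def using t by (intro nn_integral_flow_quotient_error_le) (auto simp: dist_real_def)
  qed simp
  have "((\<lambda>s. K * ennreal ((s - t)\<^sup>2)) \<longlongrightarrow> K * ennreal 0) (at t within {0..})"
  proof (rule ennreal_tendsto_cmult)
    show "K < \<top>" unfolding K_def using D_finite by (simp add: ennreal_mult_less_top)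
    have "((\<lambda>s. (s - t)\<^sup>2) \<longlongrightarrow> (t - t)\<^sup>2) (at t within {0..})" by (intro tendsto_intros)
    then show "((\<lambda>s. ennreal ((s - t)\<^sup>2)) \<longlongrightarrow> ennreal 0) (at t within {0..})"
      by (intro tendsto_ennrealI) simp
  qed
  then have lim: "((\<lambda>s. K * ennreal ((s - t)\<^sup>2)) \<longlongrightarrow> 0) (at t within {0..})"
    by simp
  have "(F \<longlongrightarrow> 0) (at t within {0..})"
    by (rule tendsto_sandwich[OF _ bound tendsto_const lim]) simp
  then show "((\<lambda>s. \<integral>\<^sup>+x. ennreal (((flow s x - flow t x) / (s - t) - laplacian_m m (flow t) x)\<^sup>2) \<partial>\<nu>)
      \<longlongrightarrow> 0) (at t within {0..})"
    unfolding F_def .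
next
  fix t :: real assume "0 \<le> t"
  then show "flow t \<in> borel_measurable \<nu>" "integrable \<nu> (\<lambda>x. (flow t x)\<^sup>2)"
    by (simp_all add: square_integrable_flow)
qed (simp add: flow_0)

lemma flow_eq_0_on_N_set:
  assumes x: "x \<in> N_set m D" "x \<notin> D"
  shows "flow t x = 0"
proof -
  have "walk_average n x = 0" for n
  proof (cases n)
    case 0
    then show ?thesis using u0_le_indicator[of x] u0_nonneg[of x] x by (simp add: walk_average_0)
  next
    case (Suc k)
    then have "measure (mstar m n x) D = 0" using x by (auto simp: N_set_def measure_def)
    then show ?thesis using walk_average_le_measure[of n x] walk_average_nonneg[of n x] by simp
  qed
  then show ?thesis by (simp add: flow_def poisson_mean_def exp_series_def)
qed

lemma not_AE_flow_pos:
  assumes N: "emeasure \<nu> (N_set m D) \<noteq> 0"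
  shows "\<not> (AE x in \<nu>. 0 < flow t x)"
proof
  assume pos: "AE x in \<nu>. 0 < flow t x"
  have "D \<inter> N_set m D \<in> null_sets \<nu>"
    using emeasure_Int_N_set[OF D] D measurable_N_set[OF D] by (auto intro: null_setsI)
  then have "AE x in \<nu>. x \<notin> D \<inter> N_set m D" by (rule AE_not_in)
  with pos have "AE x in \<nu>. x \<notin> N_set m D"
    by eventually_elim (use flow_eq_0_on_N_set in force)
  then show False
    using N measurable_N_set[OF D] by (simp add: AE_iff_measurable[OF _ refl])
qed

end

section \<open>Connectedness and positivity of heat flows\<close>

lemma open_exists_continuous_positive_below_indicator:
  fixes D :: "'a::metric_space set"
  assumes "open D"
  obtains v :: "'a \<Rightarrow> real" where "continuous_on UNIV v" "\<And>x. 0 \<le> v x"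
    "\<And>x. v x \<le> indicator D x" "\<And>x. x \<in> D \<Longrightarrow> 0 < v x"
proof (cases "D = UNIV")
  case True
  then show ?thesis by (intro that[of "\<lambda>_. 1"]) auto
next
  case False
  have "0 < infdist x (- D)" if "x \<in> D" for x
    using assms False that by (intro infdist_pos_not_in_closed) auto
  then show ?thesis
    by (intro that[of "\<lambda>x. min 1 (infdist x (- D))"])
      (auto intro!: continuous_intros simp: infdist_nonneg indicator_def)
qed

context reversible_random_walk
begin

lemma exists_level_set_nonnull:
  fixes f :: "'a \<Rightarrow> real"
  assumes [measurable]: "f \<in> borel_measurable borel"
    and nonneg: "AE x in \<nu>. 0 \<le> f x" and nonzero: "\<not> (AE x in \<nu>. f x = 0)"
  obtains \<epsilon> where "0 < \<epsilon>" "emeasure \<nu> {x. \<epsilon> < f x} \<noteq> 0"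
proof -
  have levels: "{x. 0 < f x} = (\<Union>k. {x. inverse (real (Suc k)) < f x})"
    using reals_Archimedean by (auto intro: less_trans[rotated])
  have pos: "emeasure \<nu> {x. 0 < f x} \<noteq> 0"
  proof
    assume "emeasure \<nu> {x. 0 < f x} = 0"
    then have "AE x in \<nu>. f x \<le> 0" by (subst AE_iff_measurable[OF _ refl]) (auto simp: not_le)
    with nonneg have "AE x in \<nu>. f x = 0" by eventually_elim simp
    with nonzero show False ..
  qed
  have "\<exists>k. emeasure \<nu> {x. inverse (real (Suc k)) < f x} \<noteq> 0"
  proof (rule ccontr)
    assume "\<not> ?thesis"
    then have "emeasure \<nu> (\<Union>k. {x. inverse (real (Suc k)) < f x}) = 0"
      by (intro emeasure_UN_eq_0) auto
    with pos levels show False by simp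
  qed
  then obtain k where "emeasure \<nu> {x. inverse (real (Suc k)) < f x} \<noteq> 0" ..
  then show ?thesis by (intro that[of "inverse (real (Suc k))"]) auto
qed

lemma level_set_finite:
  fixes f :: "'a \<Rightarrow> real"
  assumes [measurable]: "f \<in> borel_measurable borel" and f2: "integrable \<nu> (\<lambda>x. (f x)\<^sup>2)" and \<epsilon>: "0 < \<epsilon>"
  shows "emeasure \<nu> {x. \<epsilon> < f x} < \<infinity>"
proof -
  have "indicator {x. \<epsilon> < f x} x \<le> ennreal ((f x)\<^sup>2 / \<epsilon>\<^sup>2)" for x
  proof (cases "\<epsilon> < f x")
    case True
    then have "\<epsilon>\<^sup>2 \<le> (f x)\<^sup>2" using \<epsilon> by (intro power_mono) auto
    then show ?thesis using True \<epsilon> by simp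
  qed simp
  then have "(\<integral>\<^sup>+x. indicator {x. \<epsilon> < f x} x \<partial>\<nu>) \<le> (\<integral>\<^sup>+x. ennreal ((f x)\<^sup>2 / \<epsilon>\<^sup>2) \<partial>\<nu>)"
    by (intro nn_integral_mono)
  then have "emeasure \<nu> {x. \<epsilon> < f x} \<le> (\<integral>\<^sup>+x. ennreal ((f x)\<^sup>2 / \<epsilon>\<^sup>2) \<partial>\<nu>)"
    by simp
  also have "\<dots> < \<infinity>"
    using integrable_divide[OF f2, of "\<epsilon>\<^sup>2"] by (simp add: integrable_iff_bounded)
  finally show ?thesis .
qed

definition heat_flows_positive :: "('a \<Rightarrow> real) \<Rightarrow> bool" where
  "heat_flows_positive u0 \<longleftrightarrow> (\<forall>u. heat_flow m \<nu> u0 u \<longrightarrow> (\<forall>t>0. AE x in \<nu>. u t x > 0))"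

lemma heat_flows_positive_if_level_sets_reach:
  assumes u0: "L2_fun \<nu> u0" "AE x in \<nu>. 0 \<le> u0 x" "\<not> (AE x in \<nu>. u0 x = 0)"
    and reach: "\<And>\<epsilon>. 0 < \<epsilon> \<Longrightarrow> 0 < emeasure \<nu> {x. \<epsilon> < u0 x} \<Longrightarrow> emeasure \<nu> {x. \<epsilon> < u0 x} < \<infinity> \<Longrightarrow>
      emeasure \<nu> (N_set m {x. \<epsilon> < u0 x}) = 0"
  shows "heat_flows_positive u0"
  unfolding heat_flows_positive_def
proof (intro allI impI)
  fix u t assume "heat_flow m \<nu> u0 u" "0 < (t::real)"
  then interpret reversible_heat_flow m \<nu> u0 u by unfold_locales
  have meas [measurable]: "u0 \<in> borel_measurable borel" using u0(1) by (simp add: L2_fun_def)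
  obtain \<epsilon> where \<epsilon>: "0 < \<epsilon>" "emeasure \<nu> {x. \<epsilon> < u0 x} \<noteq> 0"
    using exists_level_set_nonnull[OF meas u0(2,3)] by blast
  moreover have "emeasure \<nu> {x. \<epsilon> < u0 x} < \<infinity>"
    using u0(1) \<epsilon> by (intro level_set_finite) (auto simp: L2_fun_def)
  ultimately have "emeasure \<nu> (N_set m {x. \<epsilon> < u0 x}) = 0"
    by (intro reach) (auto simp: zero_less_iff_neq_zero)
  then show "AE x in \<nu>. 0 < u t x"
    using \<epsilon>(1) u0(2) \<open>0 < t\<close> by (intro AE_u_pos_if_N_set_null[of "{x. \<epsilon> < u0 x}"]) auto
qed

lemma not_heat_flows_positive_if_not_reach:
  assumes D_props: "D \<in> sets borel" "0 < emeasure \<nu> D" "emeasure \<nu> D < \<infinity>"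
    and not_reach: "emeasure \<nu> (N_set m D) \<noteq> 0"
    and [measurable]: "u0 \<in> borel_measurable borel"
    and u0: "\<And>x. 0 \<le> u0 x" "\<And>x. u0 x \<le> indicator D x" "\<And>x. x \<in> D \<Longrightarrow> 0 < u0 x"
  shows "L2_fun \<nu> u0" "\<not> (AE x in \<nu>. u0 x = 0)" "\<not> heat_flows_positive u0"
proof -
  interpret poisson_construction m \<nu> D u0 by unfold_locales (use D_props u0 in auto)
  show "L2_fun \<nu> u0" using square_integrable_flow[of 0] by (simp add: L2_fun_def flow_0)
  show "\<not> (AE x in \<nu>. u0 x = 0)"
  proof
    assume "AE x in \<nu>. u0 x = 0"
    then have "AE x in \<nu>. x \<notin> D" by eventually_elim (auto dest: u0(3))
    then show False using D_props(1,2) by (simp add: AE_iff_measurable[OF _ refl])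
  qed
  show "\<not> heat_flows_positive u0"
    unfolding heat_flows_positive_def using heat_flow_flow not_AE_flow_pos[OF not_reach, of 1]
    by (auto intro!: exI[of _ flow] exI[of _ 1])
qed

lemma m_connected_iff_heat_flows_positive:
  "m_connected m \<nu> \<longleftrightarrow>
    (\<forall>u0. L2_fun \<nu> u0 \<and> (AE x in \<nu>. 0 \<le> u0 x) \<and> \<not> (AE x in \<nu>. u0 x = 0) \<longrightarrow> heat_flows_positive u0)"
proof (intro iffI allI impI)
  fix u0 assume "m_connected m \<nu>" and u0: "L2_fun \<nu> u0 \<and> (AE x in \<nu>. 0 \<le> u0 x) \<and> \<not> (AE x in \<nu>. u0 x = 0)"
  moreover have "{x. \<epsilon> < u0 x} \<in> sets \<nu>" for \<epsilon>
  proof -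
    have [measurable]: "u0 \<in> borel_measurable borel" using u0 by (simp add: L2_fun_def)
    show ?thesis unfolding sets_\<nu>_iff by measurable
  qed
  ultimately show "heat_flows_positive u0"
    unfolding m_connected_def by (intro heat_flows_positive_if_level_sets_reach) auto
next
  assume positive: "\<forall>u0. L2_fun \<nu> u0 \<and> (AE x in \<nu>. 0 \<le> u0 x) \<and> \<not> (AE x in \<nu>. u0 x = 0) \<longrightarrow>
    heat_flows_positive u0"
  show "m_connected m \<nu>"
    unfolding m_connected_def
  proof (intro ballI impI, rule ccontr)
    fix D assume "D \<in> sets \<nu>" "0 < emeasure \<nu> D \<and> emeasure \<nu> D < \<infinity>" "emeasure \<nu> (N_set m D) \<noteq> 0"
    then show False
      using not_heat_flows_positive_if_not_reach[of D "indicator D"] positive by auto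
  qed
qed

lemma weakly_m_connected_iff_heat_flows_positive:
  "weakly_m_connected m \<nu> \<longleftrightarrow>
    (\<forall>u0. L2_fun \<nu> u0 \<and> continuous_on UNIV u0 \<and> (AE x in \<nu>. 0 \<le> u0 x) \<and> \<not> (AE x in \<nu>. u0 x = 0) \<longrightarrow>
      heat_flows_positive u0)"
proof (intro iffI allI impI)
  fix u0
  assume "weakly_m_connected m \<nu>"
    and u0: "L2_fun \<nu> u0 \<and> continuous_on UNIV u0 \<and> (AE x in \<nu>. 0 \<le> u0 x) \<and> \<not> (AE x in \<nu>. u0 x = 0)"
  moreover have "open {x. \<epsilon> < u0 x}" for \<epsilon>
    using u0 by (intro open_Collect_less continuous_intros) auto
  ultimately show "heat_flows_positive u0"
    unfolding weakly_m_connected_def by (intro heat_flows_positive_if_level_sets_reach) auto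
next
  assume positive: "\<forall>u0. L2_fun \<nu> u0 \<and> continuous_on UNIV u0 \<and> (AE x in \<nu>. 0 \<le> u0 x) \<and>
    \<not> (AE x in \<nu>. u0 x = 0) \<longrightarrow> heat_flows_positive u0"
  show "weakly_m_connected m \<nu>"
    unfolding weakly_m_connected_def
  proof (intro allI impI, rule ccontr)
    fix D assume D: "open D \<and> 0 < emeasure \<nu> D \<and> emeasure \<nu> D < \<infinity>" "emeasure \<nu> (N_set m D) \<noteq> 0"
    then obtain v :: "'a \<Rightarrow> real" where v: "continuous_on UNIV v" "\<And>x. 0 \<le> v x"
      "\<And>x. v x \<le> indicator D x" "\<And>x. x \<in> D \<Longrightarrow> 0 < v x"
      using open_exists_continuous_positive_below_indicator by blast
    then have "v \<in> borel_measurable borel" by (intro borel_measurable_continuous_onI)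
    then show False
      using not_heat_flows_positive_if_not_reach[of D v] positive D v by auto
  qed
qed

end

lemma reversible_random_walkI:
  assumes "metric_random_walk_space m" "radon_measure \<nu>" "sigma_finite_measure \<nu>"
    "invariant_measure m \<nu>" "reversible_measure m \<nu>"
  shows "reversible_random_walk m \<nu>"
  using assms
  unfolding metric_random_walk_space_def radon_measure_def invariant_measure_def reversible_measure_def
  by (intro reversible_random_walk.intro) auto

theorem theorem2p9:
  fixes m :: "'a::polish_space \<Rightarrow> 'a measure" and \<nu> :: "'a measure"
  assumes "metric_random_walk_space m"
    and "radon_measure \<nu>"
    and "sigma_finite_measure \<nu>"
    and "invariant_measure m \<nu>"
    and "reversible_measure m \<nu>"
  shows "(m_connected m \<nu> \<longleftrightarrow>
            (\<forall>u0. L2_fun \<nu> u0 \<and> (AE x in \<nu>. 0 \<le> u0 x) \<and> \<not> (AE x in \<nu>. u0 x = 0) \<longrightarrow>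
               (\<forall>u. heat_flow m \<nu> u0 u \<longrightarrow> (\<forall>t>0. AE x in \<nu>. u t x > 0))))
       \<and> (weakly_m_connected m \<nu> \<longleftrightarrow>
            (\<forall>u0. L2_fun \<nu> u0 \<and> continuous_on UNIV u0 \<and> (AE x in \<nu>. 0 \<le> u0 x) \<and>
                  \<not> (AE x in \<nu>. u0 x = 0) \<longrightarrow>
               (\<forall>u. heat_flow m \<nu> u0 u \<longrightarrow> (\<forall>t>0. AE x in \<nu>. u t x > 0))))"
proof -
  interpret reversible_random_walk m \<nu>
    using assms by (rule reversible_random_walkI)
  show ?thesis
    using m_connected_iff_heat_flows_positive weakly_m_connected_iff_heat_flows_positive
    unfolding heat_flows_positive_def by simp
qed

end
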